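(* Let $n,k\ge 0$ be integers with $n\ge 2k-1$. For every $\alpha\in F_n(2,k)$, the list $\mathcal{F}(\alpha)$ is suffix partitioned.
   Context: The weight of a binary word is its number of 1's. $F_n(2,k)$ is the set of binary words of length $n$ and weight $k$ containing no two consecutive 1's. A homogeneous transposition of a binary word exchanges a 1 and a 0 such that no 1 occurs strictly between the two exchanged positions. For a set $S$ of binary words of the same length and weight and $\alpha\in S$, the list obtained by applying the greedy algorithm for $S$ to $\alpha$ is built as follows: start with the list $(\alpha)$; repeatedly, for the last word $w$ of the current list, among all words obtainable from $w$ by one homogeneous transposition that lie in $S$ and do not already occur in the list, choose the one obtained by transposing the leftmost possible 1 with (among transpositions of that 1) the leftmost possible 0, and append it; stop when no such word exists. $\mathcal{F}(\alpha)$ denotes the list obtained by applying the greedy algorithm for $F_n(2,k)$ to $\alpha\in F_n(2,k)$. A list is suffix partitioned if, for every word $s$, the words of the list having suffix $s$ occupy consecutive positions. *)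

theory Defs
  imports Main "HOL-Library.Sublist"
begin

text \<open>Binary words are bool lists; True stands for the letter 1, False for 0.\<close>

definition weight :: "bool list \<Rightarrow> nat" where
  "weight w = count_list w True"

definition Fib_words :: "nat \<Rightarrow> nat \<Rightarrow> bool list set" where
  "Fib_words n k = {w. length w = n \<and> weight w = k \<and>
      (\<forall>i. Suc i < n \<longrightarrow> \<not> (w ! i \<and> w ! Suc i))}"

definition hom_trans_ok :: "bool list \<Rightarrow> nat \<Rightarrow> nat \<Rightarrow> bool" where
  "hom_trans_ok w i j \<longleftrightarrow> i < length w \<and> j < length w \<and> w ! i \<and> \<not> w ! j \<and>
      (\<forall>m. min i j < m \<and> m < max i j \<longrightarrow> \<not> w ! m)"

definition hom_trans :: "bool list \<Rightarrow> nat \<Rightarrow> nat \<Rightarrow> bool list" where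
  "hom_trans w i j = w[i := False, j := True]"

definition greedy_cands :: "bool list set \<Rightarrow> bool list list \<Rightarrow> bool list \<Rightarrow> (nat \<times> nat) set" where
  "greedy_cands S L w = {(i, j). hom_trans_ok w i j \<and> hom_trans w i j \<in> S \<and> hom_trans w i j \<notin> set L}"

definition greedy_next :: "bool list set \<Rightarrow> bool list list \<Rightarrow> bool list \<Rightarrow> bool list option" where
  "greedy_next S L w =
     (let C = greedy_cands S L w in
      if C = {} then None
      else let i0 = (LEAST i. \<exists>j. (i, j) \<in> C);
               j0 = (LEAST j. (i0, j) \<in> C)
           in Some (hom_trans w i0 j0))"

fun greedy_aux :: "bool list set \<Rightarrow> nat \<Rightarrow> bool list list \<Rightarrow> bool list list" where
  "greedy_aux S 0 L = L"
| "greedy_aux S (Suc f) L =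
     (case greedy_next S L (last L) of
        None \<Rightarrow> L
      | Some v \<Rightarrow> greedy_aux S f (L @ [v]))"

text \<open>The greedy list for S started at alpha. The fuel card S is never exhausted
  before the algorithm stops when alpha is in the finite set S, since the list consists of
  distinct elements of S.\<close>
definition greedy :: "bool list set \<Rightarrow> bool list \<Rightarrow> bool list list" where
  "greedy S \<alpha> = greedy_aux S (card S) [\<alpha>]"

definition Fgreedy :: "nat \<Rightarrow> nat \<Rightarrow> bool list \<Rightarrow> bool list list" where
  "Fgreedy n k \<alpha> = greedy (Fib_words n k) \<alpha>"

definition suffix_partitioned :: "bool list list \<Rightarrow> bool" where
  "suffix_partitioned L \<longleftrightarrow>
     (\<forall>s p q r. p \<le> q \<and> q \<le> r \<and> r < length L \<and> suffix s (L ! p) \<and> suffix s (L ! r)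
        \<longrightarrow> suffix s (L ! q))"

end

theory Submission
  imports Defs
begin

text \<open>Write \<open>top_word n k\<close> for \<open>0\<dots>0101\<dots>01\<close>, the word of \<open>F\<^sub>n(2,k)\<close> with its 1's packed
  to the right. The greedy list is governed by the last letters. Started at \<open>a' 01\<close> it is the
  greedy list of \<open>a'\<close> with \<open>01\<close> appended, until the prefix reaches \<open>top_word (n-2) (k-1)\<close>, where
  no move is possible any more. Started at \<open>a' 0\<close> it is the greedy list of \<open>a'\<close> with \<open>0\<close>
  appended; then one move carries the rightmost 1 to the last position, and the list continues
  as a greedy list of length \<open>n-2\<close> with \<open>01\<close> appended. Started at \<open>top_word n k\<close> the two blocks
  occur in the opposite order. Appending a fixed suffix preserves suffix partitioning and the two
  blocks differ in their last letter, so the theorem follows by strong induction on \<open>n\<close>, provided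
  one also keeps track of where each greedy list ends and of the start words (the packed word
  \<open>1010\<dots>\<close> and the shifted copies of \<open>top_word\<close>) for which it exhausts \<open>F\<^sub>n(2,k)\<close>.\<close>

section \<open>Greedy lists\<close>

text \<open>\<open>greedy_steps S V L\<close>: each word of \<open>L\<close> is the greedy successor of the previous one,
  the words \<open>V\<close> having been visited before \<open>L\<close> started.\<close>

definition greedy_steps :: "bool list set \<Rightarrow> bool list list \<Rightarrow> bool list list \<Rightarrow> bool" where
  "greedy_steps S V L \<longleftrightarrow> (\<forall>t. Suc t < length L \<longrightarrow>
      greedy_next S (V @ take (Suc t) L) (L ! t) = Some (L ! Suc t))"

definition is_greedy_run :: "bool list set \<Rightarrow> bool list list \<Rightarrow> bool" where
  "is_greedy_run S L \<longleftrightarrow> L \<noteq> [] \<and> greedy_steps S [] L \<and> greedy_next S L (last L) = None"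

lemma greedy_next_eq_None_iff: "greedy_next S L w = None \<longleftrightarrow> greedy_cands S L w = {}"
  by (simp add: greedy_next_def Let_def)

lemma greedy_next_eqI:
  assumes "(i, j) \<in> greedy_cands S L w"
    and "\<And>i' j'. (i', j') \<in> greedy_cands S L w \<Longrightarrow> i \<le> i'"
    and "\<And>j'. (i, j') \<in> greedy_cands S L w \<Longrightarrow> j \<le> j'"
  shows "greedy_next S L w = Some (hom_trans w i j)"
proof -
  have ne: "greedy_cands S L w \<noteq> {}" using assms(1) by auto
  have i0: "(LEAST i. \<exists>j. (i, j) \<in> greedy_cands S L w) = i"
    by (rule Least_equality) (use assms in auto)
  have j0: "(LEAST j. (i, j) \<in> greedy_cands S L w) = j"
    by (rule Least_equality) (use assms in auto)
  show ?thesis using ne i0 j0 by (simp add: greedy_next_def Let_def)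
qed

lemma greedy_next_eq_SomeE:
  assumes "greedy_next S L w = Some v"
  obtains i j where "(i, j) \<in> greedy_cands S L w" "v = hom_trans w i j"
    "\<And>i' j'. (i', j') \<in> greedy_cands S L w \<Longrightarrow> i \<le> i'"
    "\<And>j'. (i, j') \<in> greedy_cands S L w \<Longrightarrow> j \<le> j'"
proof -
  let ?C = "greedy_cands S L w"
  have ne: "?C \<noteq> {}" using assms by (auto simp: greedy_next_def)
  then obtain a b where ab: "(a, b) \<in> ?C" by auto
  define i0 where "i0 = (LEAST i. \<exists>j. (i, j) \<in> ?C)"
  have "\<exists>j. (i0, j) \<in> ?C" unfolding i0_def by (rule LeastI[of _ a]) (use ab in auto)
  then obtain c where c: "(i0, c) \<in> ?C" by auto
  define j0 where "j0 = (LEAST j. (i0, j) \<in> ?C)"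
  have "(i0, j0) \<in> ?C" unfolding j0_def by (rule LeastI[of _ c]) (use c in auto)
  moreover have "v = hom_trans w i0 j0"
    using assms ne by (simp add: greedy_next_def Let_def i0_def j0_def)
  moreover have "i0 \<le> i'" if "(i', j') \<in> ?C" for i' j'
    unfolding i0_def using that by (auto intro: Least_le)
  moreover have "j0 \<le> j'" if "(i0, j') \<in> ?C" for j'
    unfolding j0_def using that by (auto intro: Least_le)
  ultimately show ?thesis using that by blast
qed

lemma greedy_next_Some_mem:
  assumes "greedy_next S L w = Some v"
  shows "v \<in> S" "v \<notin> set L"
  using assms by (auto elim!: greedy_next_eq_SomeE simp: greedy_cands_def)

lemma greedy_steps_append:
  assumes "greedy_steps S V A" "greedy_steps S (V @ A) B"
    "A \<noteq> [] \<Longrightarrow> B \<noteq> [] \<Longrightarrow> greedy_next S (V @ A) (last A) = Some (hd B)"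
  shows "greedy_steps S V (A @ B)"
  unfolding greedy_steps_def
proof (intro allI impI)
  fix t assume t: "Suc t < length (A @ B)"
  consider "Suc t < length A" | "Suc t = length A" | "length A \<le> t" by arith
  then show "greedy_next S (V @ take (Suc t) (A @ B)) ((A @ B) ! t) = Some ((A @ B) ! Suc t)"
  proof cases
    case 1 then show ?thesis using assms(1) by (simp add: greedy_steps_def nth_append)
  next
    case 2
    then have An: "A \<noteq> []" and Bn: "B \<noteq> []" using t by auto
    have "A ! t = last A" using 2 An by (metis diff_Suc_1 last_conv_nth)
    moreover have "B ! 0 = hd B" using Bn by (simp add: hd_conv_nth)
    ultimately show ?thesis using 2 assms(3)[OF An Bn] by (simp add: nth_append)
  next
    case 3
    define t' where "t' = t - length A"
    have tt: "t = length A + t'" using 3 by (simp add: t'_def)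
    have "Suc t' < length B" using t tt by simp
    then have "greedy_next S ((V @ A) @ take (Suc t') B) (B ! t') = Some (B ! Suc t')"
      using assms(2) by (simp add: greedy_steps_def)
    then show ?thesis using tt by (simp add: nth_append)
  qed
qed

lemma is_greedy_run_greedy_aux:
  assumes "finite S" "L \<noteq> []" "greedy_steps S [] L" "distinct L" "set L \<subseteq> S"
    "card S < f + length L"
  shows "is_greedy_run S (greedy_aux S f L) \<and> take (length L) (greedy_aux S f L) = L
         \<and> distinct (greedy_aux S f L) \<and> set (greedy_aux S f L) \<subseteq> S"
  using assms
proof (induction f arbitrary: L)
  case 0
  have "card (set L) \<le> card S" using 0 by (simp add: card_mono)
  then have "length L \<le> card S" using 0 by (simp add: distinct_card)
  then show ?case using 0 by simp
next
  case (Suc f)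
  show ?case
  proof (cases "greedy_next S L (last L)")
    case None
    then show ?thesis using Suc.prems by (simp add: is_greedy_run_def)
  next
    case (Some v)
    have v: "v \<in> S" "v \<notin> set L" using greedy_next_Some_mem[OF Some] by auto
    have st: "greedy_steps S [] (L @ [v])"
      by (rule greedy_steps_append) (use Suc.prems(3) Some in \<open>simp_all add: greedy_steps_def\<close>)
    have IH: "is_greedy_run S (greedy_aux S f (L @ [v]))
        \<and> take (Suc (length L)) (greedy_aux S f (L @ [v])) = L @ [v]
        \<and> distinct (greedy_aux S f (L @ [v])) \<and> set (greedy_aux S f (L @ [v])) \<subseteq> S"
      using Suc.IH[of "L @ [v]"] Suc.prems st v by simp
    have "take (length L) (greedy_aux S f (L @ [v]))
        = take (length L) (take (Suc (length L)) (greedy_aux S f (L @ [v])))" by simp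
    also have "\<dots> = L" using IH by simp
    finally have "take (length L) (greedy_aux S f (L @ [v])) = L" .
    then show ?thesis using IH Some by simp
  qed
qed

lemma is_greedy_run_greedy:
  assumes "finite S" "a \<in> S"
  shows "is_greedy_run S (greedy S a)" "hd (greedy S a) = a" "set (greedy S a) \<subseteq> S"
proof -
  have "S \<noteq> {}" using assms(2) by blast
  then have "card S > 0" using assms(1) by (simp add: card_gt_0_iff)
  then have H: "is_greedy_run S (greedy_aux S (card S) [a]) \<and> take 1 (greedy_aux S (card S) [a]) = [a]
         \<and> distinct (greedy_aux S (card S) [a]) \<and> set (greedy_aux S (card S) [a]) \<subseteq> S"
    using is_greedy_run_greedy_aux[of S "[a]" "card S"] assms unfolding greedy_steps_def by simp
  then show "is_greedy_run S (greedy S a)" "set (greedy S a) \<subseteq> S" by (auto simp: greedy_def)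
  from H have "greedy_aux S (card S) [a] \<noteq> []" by (auto simp: is_greedy_run_def)
  then obtain x xs where "greedy_aux S (card S) [a] = x # xs"
    by (cases "greedy_aux S (card S) [a]") auto
  then show "hd (greedy S a) = a" using H unfolding greedy_def by simp
qed

lemma is_greedy_run_unique:
  assumes "is_greedy_run S L1" "is_greedy_run S L2" "hd L1 = hd L2"
  shows "L1 = L2"
proof -
  have agree: "\<forall>t. t < length L1 \<and> t < length L2 \<longrightarrow> L1 ! t = L2 ! t"
  proof (intro allI)
    fix t show "t < length L1 \<and> t < length L2 \<longrightarrow> L1 ! t = L2 ! t"
    proof (induction t rule: less_induct)
      case (less t)
      show ?case
      proof (cases t)
        case 0 then show ?thesis using assms by (auto simp: is_greedy_run_def hd_conv_nth)
      next
        case (Suc t')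
        show ?thesis
        proof
          assume tl: "t < length L1 \<and> t < length L2"
          have eqtake: "take (Suc t') L1 = take (Suc t') L2"
            by (rule nth_equalityI) (use less Suc tl in auto)
          have "greedy_next S (take (Suc t') L1) (L1 ! t') = Some (L1 ! t)"
            using assms(1) tl Suc by (auto simp: is_greedy_run_def greedy_steps_def)
          moreover have "greedy_next S (take (Suc t') L2) (L2 ! t') = Some (L2 ! t)"
            using assms(2) tl Suc by (auto simp: is_greedy_run_def greedy_steps_def)
          moreover have "L1 ! t' = L2 ! t'" using less Suc tl by auto
          ultimately show "L1 ! t = L2 ! t" using eqtake by simp
        qed
      qed
    qed
  qed
  have len: "length L1 = length L2"
  proof (rule ccontr)
    assume ne: "length L1 \<noteq> length L2"
    have gen: "\<And>A B. is_greedy_run S A \<Longrightarrow> is_greedy_run S B \<Longrightarrow> length A < length B \<Longrightarrow>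
       (\<forall>t. t < length A \<and> t < length B \<longrightarrow> A ! t = B ! t) \<Longrightarrow> False"
    proof -
      fix A B assume rA: "is_greedy_run S A" and rB: "is_greedy_run S B" and lt: "length A < length B"
        and ag: "\<forall>t. t < length A \<and> t < length B \<longrightarrow> A ! t = B ! t"
      have An: "A \<noteq> []" using rA by (simp add: is_greedy_run_def)
      define t where "t = length A - 1"
      have tk: "Suc t = length A" using An by (simp add: t_def)
      have tkB: "take (Suc t) B = A" by (rule nth_equalityI) (use tk lt ag in auto)
      have "Suc t < length B" using lt tk by simp
      then have "greedy_next S (take (Suc t) B) (B ! t) = Some (B ! Suc t)"
        using rB unfolding is_greedy_run_def greedy_steps_def by simp
      moreover have "B ! t = last A"
      proof -
        have "t < length A" "t < length B" using tk lt by auto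
        then have "B ! t = A ! t" using ag by simp
        also have "\<dots> = last A" using tk An by (metis diff_Suc_1 last_conv_nth)
        finally show ?thesis .
      qed
      ultimately have "greedy_next S A (last A) \<noteq> None" using tkB by simp
      then show False using rA by (simp add: is_greedy_run_def)
    qed
    from ne have "length L1 < length L2 \<or> length L2 < length L1" by arith
    then show False
      using gen[OF assms(1,2)] gen[OF assms(2,1)] agree by (metis)
  qed
  show ?thesis by (rule nth_equalityI) (use len agree in auto)
qed

lemma greedy_eq_if_is_greedy_run:
  assumes "finite S" "is_greedy_run S L" "hd L \<in> S"
  shows "greedy S (hd L) = L"
  using is_greedy_run_unique[OF is_greedy_run_greedy(1)[OF assms(1,3)] assms(2)]
    is_greedy_run_greedy(2)[OF assms(1,3)] by simp

lemma greedy_singleton: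
  assumes "S = {a}" shows "greedy S a = [a]"
proof -
  have "greedy_cands S [a] a = {}" unfolding greedy_cands_def assms by auto
  then have r: "is_greedy_run S [a]"
    by (simp add: is_greedy_run_def greedy_steps_def greedy_next_eq_None_iff)
  have f: "finite S" "hd [a] \<in> S" using assms by auto
  have "greedy S (hd [a]) = [a]" by (rule greedy_eq_if_is_greedy_run[OF f(1) r f(2)])
  then show ?thesis by simp
qed

lemma greedy_eq_append:
  assumes "finite S" "hd L1 \<in> S" "L1 \<noteq> []" "L2 \<noteq> []"
    and "greedy_steps S [] L1" "greedy_steps S L1 L2"
    and "greedy_next S L1 (last L1) = Some (hd L2)"
    and "greedy_cands S (L1 @ L2) (last L2) = {}"
  shows "greedy S (hd L1) = L1 @ L2"
proof -
  have "greedy_steps S [] (L1 @ L2)"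
    by (rule greedy_steps_append) (use assms(5-7) in simp_all)
  then have "is_greedy_run S (L1 @ L2)"
    using assms(4,8) by (simp add: is_greedy_run_def greedy_next_eq_None_iff)
  then show ?thesis using greedy_eq_if_is_greedy_run[OF assms(1)] assms(2,3) by fastforce
qed

lemma length_hom_trans[simp]: "length (hom_trans w i j) = length w"
  by (simp add: hom_trans_def)

lemma nth_hom_trans:
  "k < length w \<Longrightarrow> i \<noteq> j \<Longrightarrow>
    hom_trans w i j ! k = (if k = j then True else if k = i then False else w ! k)"
  by (simp add: hom_trans_def nth_list_update)

lemma hom_trans_hom_trans:
  assumes "i < length w" "j < length w" "w ! i" "\<not> w ! j"
  shows "hom_trans (hom_trans w i j) j i = w"
proof -
  have "i \<noteq> j" using assms by auto
  then show ?thesis by (intro nth_equalityI) (use assms in \<open>auto simp: nth_hom_trans\<close>)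
qed

lemma hom_trans_ok_append:
  assumes "length w = m" "i < m" "j < m"
  shows "hom_trans_ok (w @ s) i j \<longleftrightarrow> hom_trans_ok w i j"
  using assms by (auto simp: hom_trans_ok_def nth_append)

lemma hom_trans_append:
  assumes "length w = m" "i < m" "j < m"
  shows "hom_trans (w @ s) i j = hom_trans w i j @ s"
  using assms by (simp add: hom_trans_def list_update_append)

lemma greedy_cands_append_iff:
  assumes memb: "\<forall>x. length x = m \<longrightarrow> (x @ s \<in> S \<longleftrightarrow> x \<in> S')"
    and fresh: "\<forall>u \<in> set V. \<forall>x. u \<noteq> x @ s"
    and len: "length w = m" and ij: "i < m" "j < m"
  shows "(i, j) \<in> greedy_cands S (V @ map (\<lambda>u. u @ s) M) (w @ s) \<longleftrightarrow> (i, j) \<in> greedy_cands S' M w"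
proof -
  have h: "hom_trans (w @ s) i j = hom_trans w i j @ s" using hom_trans_append[OF len ij] .
  have lh: "length (hom_trans w i j) = m" using len by simp
  have m1: "hom_trans w i j @ s \<in> S \<longleftrightarrow> hom_trans w i j \<in> S'" using memb lh by blast
  have m2: "hom_trans w i j @ s \<in> set (V @ map (\<lambda>u. u @ s) M) \<longleftrightarrow> hom_trans w i j \<in> set M"
    using fresh by auto
  show ?thesis unfolding greedy_cands_def
    using hom_trans_ok_append[OF len ij, of s] h m1 m2 by auto
qed

text \<open>The hypothesis \<open>prio\<close> says that a move touching the suffix \<open>s\<close> never precedes a move
  inside \<open>w\<close> in the greedy order (leftmost 1 first, then leftmost 0).\<close>

lemma greedy_next_append:
  assumes memb: "\<forall>x. length x = m \<longrightarrow> (x @ s \<in> S \<longleftrightarrow> x \<in> S')"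
    and fresh: "\<forall>u \<in> set V. \<forall>x. u \<noteq> x @ s"
    and len: "length w = m"
    and prio: "\<And>i j. (i, j) \<in> greedy_cands S (V @ map (\<lambda>u. u @ s) M) (w @ s) \<Longrightarrow> \<not> (i < m \<and> j < m)
        \<Longrightarrow> (\<forall>i'<m. w ! i' \<longrightarrow> i' < i \<or> (i' = i \<and> m \<le> j))"
    and gn: "greedy_next S' M w = Some v"
  shows "greedy_next S (V @ map (\<lambda>u. u @ s) M) (w @ s) = Some (v @ s)"
proof -
  let ?C = "greedy_cands S (V @ map (\<lambda>u. u @ s) M) (w @ s)"
  let ?C' = "greedy_cands S' M w"
  obtain i0 j0 where c0: "(i0, j0) \<in> ?C'" and v: "v = hom_trans w i0 j0"
    and imin: "\<And>i' j'. (i', j') \<in> ?C' \<Longrightarrow> i0 \<le> i'"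
    and jmin: "\<And>j'. (i0, j') \<in> ?C' \<Longrightarrow> j0 \<le> j'"
    using gn by (elim greedy_next_eq_SomeE) (rule that; assumption)
  have ok: "hom_trans_ok w i0 j0" using c0 by (simp add: greedy_cands_def)
  then have ij0: "i0 < m" "j0 < m" "w ! i0" using len by (auto simp: hom_trans_ok_def)
  have inC: "(i0, j0) \<in> ?C" using greedy_cands_append_iff[OF memb fresh len ij0(1,2)] c0 by simp
  have imin2: "i0 \<le> i'" if "(i', j') \<in> ?C" for i' j'
  proof (cases "i' < m \<and> j' < m")
    case True
    then have "(i', j') \<in> ?C'" using greedy_cands_append_iff[OF memb fresh len] that by blast
    then show ?thesis using imin by blast
  next
    case False
    then show ?thesis using prio[OF that False] ij0 by force
  qed
  have jmin2: "j0 \<le> j'" if "(i0, j') \<in> ?C" for j'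
  proof (cases "j' < m")
    case True
    then have "(i0, j') \<in> ?C'" using greedy_cands_append_iff[OF memb fresh len ij0(1)] that by blast
    then show ?thesis using jmin by blast
  next
    case False
    then show ?thesis using ij0 by simp
  qed
  have "greedy_next S (V @ map (\<lambda>u. u @ s) M) (w @ s) = Some (hom_trans (w @ s) i0 j0)"
    by (rule greedy_next_eqI[OF inC]) (use imin2 jmin2 in auto)
  then show ?thesis using v hom_trans_append[OF len ij0(1,2)] by simp
qed

lemma greedy_cands_append_stuck:
  assumes memb: "\<forall>x. length x = m \<longrightarrow> (x @ s \<in> S \<longleftrightarrow> x \<in> S')"
    and fresh: "\<forall>u \<in> set V. \<forall>x. u \<noteq> x @ s"
    and len: "length w = m"
    and gn: "greedy_next S' M w = None"
    and c: "(i, j) \<in> greedy_cands S (V @ map (\<lambda>u. u @ s) M) (w @ s)"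
  shows "\<not> (i < m \<and> j < m)"
proof
  assume "i < m \<and> j < m"
  then have "(i, j) \<in> greedy_cands S' M w" using greedy_cands_append_iff[OF memb fresh len] c
    by blast
  then show False using gn by (simp add: greedy_next_eq_None_iff)
qed

lemma greedy_steps_map_append:
  assumes memb: "\<forall>x. length x = m \<longrightarrow> (x @ s \<in> S \<longleftrightarrow> x \<in> S')"
    and fresh: "\<forall>u \<in> set V. \<forall>x. u \<noteq> x @ s"
    and prio: "\<And>w L i j. length w = m \<Longrightarrow> (i, j) \<in> greedy_cands S L (w @ s) \<Longrightarrow>
        \<not> (i < m \<and> j < m) \<Longrightarrow> \<forall>i'<m. w ! i' \<longrightarrow> i' < i \<or> (i' = i \<and> m \<le> j)"
    and st: "greedy_steps S' [] M" and len: "\<forall>u \<in> set M. length u = m"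
  shows "greedy_steps S V (map (\<lambda>u. u @ s) M)"
  unfolding greedy_steps_def
proof (intro allI impI)
  fix t assume "Suc t < length (map (\<lambda>u. u @ s) M)"
  then have t: "Suc t < length M" by simp
  have g: "greedy_next S' (take (Suc t) M) (M ! t) = Some (M ! Suc t)"
    using st t by (simp add: greedy_steps_def)
  have lt: "length (M ! t) = m" using len t by simp
  have "greedy_next S (V @ map (\<lambda>u. u @ s) (take (Suc t) M)) (M ! t @ s) = Some (M ! Suc t @ s)"
    by (rule greedy_next_append[OF memb fresh lt _ g]) (rule prio[OF lt], assumption+)
  then show "greedy_next S (V @ take (Suc t) (map (\<lambda>u. u @ s) M)) (map (\<lambda>u. u @ s) M ! t)
      = Some (map (\<lambda>u. u @ s) M ! Suc t)"
    using t by (simp add: take_map)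
qed

section \<open>Suffix partitioned lists\<close>

lemma suffix_partitioned_singleton: "suffix_partitioned [x]"
  by (auto simp: suffix_partitioned_def)

lemma suffix_partitioned_map_append:
  assumes "suffix_partitioned M"
  shows "suffix_partitioned (map (\<lambda>u. u @ s) M)"
  unfolding suffix_partitioned_def
proof (intro allI impI)
  fix x p q r
  assume h: "p \<le> q \<and> q \<le> r \<and> r < length (map (\<lambda>u. u @ s) M) \<and>
           suffix x (map (\<lambda>u. u @ s) M ! p) \<and> suffix x (map (\<lambda>u. u @ s) M ! r)"
  then have hp: "suffix x (M ! p @ s)" and hr: "suffix x (M ! r @ s)" and pr: "p \<le> q" "q \<le> r" "r < length M"
    by auto
  show "suffix x (map (\<lambda>u. u @ s) M ! q)"
  proof (cases "suffix x s")
    case True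
    then have "suffix x (M ! q @ s)" by (rule suffix_appendI)
    then show ?thesis using pr by simp
  next
    case False
    then obtain x' where x': "x = x' @ s" "suffix x' (M ! p)" using hp unfolding suffix_append
      by blast
    have "suffix (x' @ s) (M ! r @ s)" using hr x'(1) by simp
    then have "suffix x' (M ! r)" by (simp only: same_suffix_suffix)
    then have "suffix x' (M ! q)" using assms x'(2) pr unfolding suffix_partitioned_def by blast
    then have "suffix (x' @ s) (M ! q @ s)" by (simp only: same_suffix_suffix)
    then show ?thesis using x'(1) pr by simp
  qed
qed

lemma last_suffix: "suffix x u \<Longrightarrow> x \<noteq> [] \<Longrightarrow> last x = last u"
  unfolding suffix_def by auto

lemma suffix_partitioned_append:
  assumes A: "suffix_partitioned A" and B: "suffix_partitioned B"
    and d: "\<forall>u\<in>set A. \<forall>v\<in>set B. last u \<noteq> last v"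
  shows "suffix_partitioned (A @ B)"
  unfolding suffix_partitioned_def
proof (intro allI impI)
  fix x p q r
  assume h: "p \<le> q \<and> q \<le> r \<and> r < length (A @ B) \<and> suffix x ((A @ B) ! p) \<and> suffix x ((A @ B) ! r)"
  then have pq: "p \<le> q" and qr: "q \<le> r" and rl: "r < length A + length B"
    and sp: "suffix x ((A @ B) ! p)" and sr: "suffix x ((A @ B) ! r)" by auto
  show "suffix x ((A @ B) ! q)"
  proof (cases "x = []")
    case True then show ?thesis by simp
  next
    case xne: False
    consider "r < length A" | "length A \<le> p" | "p < length A \<and> length A \<le> r" by arith
    then show ?thesis
    proof cases
      case 1
      have "suffix x (A ! p)" using sp 1 pq qr by (simp add: nth_append)
      moreover have "suffix x (A ! r)" using sr 1 by (simp add: nth_append)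
      ultimately have "suffix x (A ! q)" using A pq qr 1 unfolding suffix_partitioned_def by blast
      then show ?thesis using 1 qr by (simp add: nth_append)
    next
      case 2
      have a1: "suffix x (B ! (p - length A))" using sp 2 by (simp add: nth_append)
      have a2: "suffix x (B ! (r - length A))" using sr 2 pq qr by (simp add: nth_append)
      have a3: "p - length A \<le> q - length A" "q - length A \<le> r - length A" "r - length A < length B"
        using pq qr rl 2 by arith+
      have "suffix x (B ! (q - length A))" using B a1 a2 a3 unfolding suffix_partitioned_def
        by blast
      then show ?thesis using 2 pq by (simp add: nth_append)
    next
      case 3
      have u: "A ! p \<in> set A" "suffix x (A ! p)" using sp 3 by (auto simp: nth_append)
      have v: "B ! (r - length A) \<in> set B" "suffix x (B ! (r - length A))" using sr 3 rl
        by (auto simp: nth_append)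
      have "last (A ! p) = last (B ! (r - length A))"
        using last_suffix[OF u(2) xne] last_suffix[OF v(2) xne] by simp
      then show ?thesis using d u(1) v(1) by blast
    qed
  qed
qed

lemma suffix_partitioned_append_blocks:
  assumes "suffix_partitioned M1" "suffix_partitioned M2" "s1 \<noteq> []" "s2 \<noteq> []" "last s1 \<noteq> last s2"
  shows "suffix_partitioned (map (\<lambda>u. u @ s1) M1 @ map (\<lambda>u. u @ s2) M2)"
  using assms by (intro suffix_partitioned_append suffix_partitioned_map_append) auto

section \<open>Fibonacci words\<close>

lemma weight_append[simp]: "weight (xs @ ys) = weight xs + weight ys"
  by (simp add: weight_def)

lemma count_list_list_update:
  "i < length xs \<Longrightarrow> count_list (xs[i := x]) y =
     count_list xs y - (if xs ! i = y then 1 else 0) + (if x = y then 1 else 0)"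
proof (induction xs arbitrary: i)
  case Nil then show ?case by simp
next
  case (Cons a xs)
  show ?case
  proof (cases i)
    case 0 then show ?thesis by auto
  next
    case (Suc i')
    then have "i' < length xs" using Cons by simp
    then have IH: "count_list (xs[i' := x]) y =
     count_list xs y - (if xs ! i' = y then 1 else 0) + (if x = y then 1 else 0)" using Cons.IH by simp
    have pos: "xs ! i' = y \<Longrightarrow> count_list xs y \<ge> 1"
      using \<open>i' < length xs\<close> by (metis One_nat_def Suc_leI count_list_0_iff gr0I nth_mem)
    show ?thesis using Suc IH pos by auto
  qed
qed

lemma weight_hom_trans:
  assumes "i < length w" "j < length w" "w ! i" "\<not> w ! j"
  shows "weight (hom_trans w i j) = weight w"
proof -
  have ij: "i \<noteq> j" using assms by auto
  have c1: "count_list (w[i := False]) True = count_list w True - 1"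
    using count_list_list_update[of i w False True] assms by simp
  have "count_list ((w[i := False])[j := True]) True = count_list (w[i := False]) True + 1"
    using count_list_list_update[of j "w[i := False]" True True] assms ij by simp
  moreover have "count_list w True \<ge> 1"
    using assms by (metis One_nat_def Suc_leI count_list_0_iff gr0I nth_mem)
  ultimately show ?thesis using c1 by (simp add: hom_trans_def weight_def)
qed

lemma hom_trans_in_Fib_words:
  assumes w: "w \<in> Fib_words n k" and ok: "hom_trans_ok w i j"
    and r: "Suc j < n \<Longrightarrow> Suc j = i \<or> \<not> w ! Suc j"
    and l: "0 < j \<Longrightarrow> j - 1 = i \<or> \<not> w ! (j - 1)"
  shows "hom_trans w i j \<in> Fib_words n k"
proof -
  have len: "length w = n" using w by (simp add: Fib_words_def)
  have ij: "i < n" "j < n" "w ! i" "\<not> w ! j" "i \<noteq> j" using ok len by (auto simp: hom_trans_ok_def)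
  have wt: "weight (hom_trans w i j) = k" using weight_hom_trans[of i w j] ij len w
    by (simp add: Fib_words_def)
  have adj: "\<forall>p. Suc p < n \<longrightarrow> \<not> (hom_trans w i j ! p \<and> hom_trans w i j ! Suc p)"
  proof (intro allI impI)
    fix p assume p: "Suc p < n"
    have w0: "\<not> (w ! p \<and> w ! Suc p)" using w p by (simp add: Fib_words_def)
    show "\<not> (hom_trans w i j ! p \<and> hom_trans w i j ! Suc p)"
      using p ij len r l w0 by (auto simp: nth_hom_trans)
  qed
  show ?thesis using wt adj len by (simp add: Fib_words_def)
qed

lemma length_Fib_words: "w \<in> Fib_words n k \<Longrightarrow> length w = n" by (simp add: Fib_words_def)

lemma finite_Fib_words: "finite (Fib_words n k)"
proof (rule finite_subset)
  show "Fib_words n k \<subseteq> {xs. set xs \<subseteq> UNIV \<and> length xs = n}" by (auto simp: Fib_words_def)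
  show "finite {xs :: bool list. set xs \<subseteq> UNIV \<and> length xs = n}"
    by (rule finite_lists_length_eq) simp
qed

lemma append_False_in_Fib_words_iff:
  "length x = m \<Longrightarrow> x @ [False] \<in> Fib_words (Suc m) k \<longleftrightarrow> x \<in> Fib_words m k"
proof
  assume l: "length x = m" and h: "x @ [False] \<in> Fib_words (Suc m) k"
  show "x \<in> Fib_words m k" unfolding Fib_words_def
  proof (intro CollectI conjI allI impI)
    show "length x = m" by (rule l)
    show "weight x = k" using h by (simp add: Fib_words_def weight_def)
    fix p assume p: "Suc p < m"
    then have "\<not> ((x @ [False]) ! p \<and> (x @ [False]) ! Suc p)" using h by (simp add: Fib_words_def)
    then show "\<not> (x ! p \<and> x ! Suc p)" using p l by (simp add: nth_append)
  qed
next
  assume l: "length x = m" and x: "x \<in> Fib_words m k"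
  show "x @ [False] \<in> Fib_words (Suc m) k" unfolding Fib_words_def
  proof (intro CollectI conjI allI impI)
    show "length (x @ [False]) = Suc m" using l by simp
    show "weight (x @ [False]) = k" using x by (simp add: Fib_words_def weight_def)
    fix p assume "Suc p < Suc m"
    then consider "Suc p < m" | "Suc p = m" by arith
    then show "\<not> ((x @ [False]) ! p \<and> (x @ [False]) ! Suc p)"
    proof cases
      case 1 then show ?thesis using x l by (simp add: Fib_words_def nth_append)
    next
      case 2 then show ?thesis using l by (simp add: nth_append)
    qed
  qed
qed

lemma append_False_True_in_Fib_words_iff:
  "length x = m \<Longrightarrow> x @ [False, True] \<in> Fib_words (m+2) (Suc k) \<longleftrightarrow> x \<in> Fib_words m k"
proof
  assume l: "length x = m" and h: "x @ [False, True] \<in> Fib_words (m+2) (Suc k)"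
  show "x \<in> Fib_words m k" unfolding Fib_words_def
  proof (intro CollectI conjI allI impI)
    show "length x = m" by (rule l)
    show "weight x = k" using h by (simp add: Fib_words_def weight_def)
    fix p assume p: "Suc p < m"
    then have "\<not> ((x @ [False, True]) ! p \<and> (x @ [False, True]) ! Suc p)" using h
      by (simp add: Fib_words_def)
    then show "\<not> (x ! p \<and> x ! Suc p)" using p l by (simp add: nth_append)
  qed
next
  assume l: "length x = m" and x: "x \<in> Fib_words m k"
  show "x @ [False, True] \<in> Fib_words (m+2) (Suc k)"
    unfolding Fib_words_def
  proof (intro CollectI conjI allI impI)
    show "length (x @ [False, True]) = m + 2" using l by simp
    show "weight (x @ [False, True]) = Suc k" using x by (simp add: Fib_words_def weight_def)
    fix p assume "Suc p < m + 2"
    then consider "Suc p < m" | "Suc p = m" | "p = m" by arith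
    then show "\<not> ((x @ [False, True]) ! p \<and> (x @ [False, True]) ! Suc p)"
    proof cases
      case 1 then show ?thesis using x l by (simp add: Fib_words_def nth_append)
    next
      case 2 then show ?thesis using l by (simp add: nth_append)
    next
      case 3 then show ?thesis using l by (simp add: nth_append)
    qed
  qed
qed

lemma Fib_words_butlast:
  assumes "w \<in> Fib_words n k" "n \<ge> 1" "\<not> last w"
  shows "w = butlast w @ [False] \<and> butlast w \<in> Fib_words (n-1) k"
proof -
  have ne: "w \<noteq> []" using assms length_Fib_words by fastforce
  have e: "w = butlast w @ [False]" using ne assms(3) by (metis append_butlast_last_id)
  have eq: "Suc (n-1) = n" using assms by simp
  have "butlast w @ [False] \<in> Fib_words (Suc (n-1)) k" unfolding eq using e[symmetric] assms(1)
    by simp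
  then have "butlast w \<in> Fib_words (n-1) k"
    using append_False_in_Fib_words_iff[of "butlast w" "n-1"] assms length_Fib_words by simp
  then show ?thesis by (rule conjI[OF e])
qed

lemma Fib_words_take:
  assumes "w \<in> Fib_words n k" "n \<ge> 2" "last w"
  shows "w = take (n-2) w @ [False, True] \<and> take (n-2) w \<in> Fib_words (n-2) (k-1) \<and> k \<ge> 1"
proof -
  have len: "length w = n" using assms length_Fib_words by blast
  have ne: "w \<noteq> []" using assms len by auto
  have l: "w ! (n-1)" using assms ne len by (simp add: last_conv_nth)
  have "\<not> (w ! (n-2) \<and> w ! Suc (n-2))" using assms len by (simp add: Fib_words_def)
  moreover have "Suc (n-2) = n-1" using assms by simp
  ultimately have l2: "\<not> w ! (n-2)" using l by simp
  have e: "w = take (n-2) w @ [False, True]"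
  proof (rule nth_equalityI)
    show "length w = length (take (n-2) w @ [False, True])" using len assms by simp
    fix i assume "i < length w"
    then consider "i < n-2" | "i = n-2" | "i = n-1" using len by arith
    then show "w ! i = (take (n-2) w @ [False, True]) ! i"
      by cases (use len assms l l2 in \<open>auto simp: nth_append\<close>)
  qed
  have "weight w = weight (take (n-2) w @ [False, True])" using e by (rule arg_cong)
  then have wt: "weight w \<ge> 1" by (simp add: weight_def)
  then have k1: "k \<ge> 1" using assms by (simp add: Fib_words_def)
  have eq: "(n-2)+2 = n" "Suc (k-1) = k" using assms k1 by auto
  have "take (n-2) w @ [False, True] \<in> Fib_words ((n-2)+2) (Suc (k-1))"
    unfolding eq using e[symmetric] assms(1) by simp
  then have "take (n-2) w \<in> Fib_words (n-2) (k-1)"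
    using append_False_True_in_Fib_words_iff[of "take (n-2) w" "n-2"] len by simp
  then show ?thesis using e k1 by blast
qed

lemma Fib_words_weight_bound: "w \<in> Fib_words n k \<Longrightarrow> 2*k \<le> n + 1"
proof (induction n arbitrary: w k rule: less_induct)
  case (less n)
  show ?case
  proof (cases "n \<le> 1")
    case True
    have "weight w \<le> length w" by (simp add: weight_def count_le_length)
    then show ?thesis using less.prems True by (auto simp: Fib_words_def)
  next
    case False
    show ?thesis
    proof (cases "last w")
      case True
      from Fib_words_take[OF less.prems _ True] False
      have "take (n-2) w \<in> Fib_words (n-2) (k-1)" "k \<ge> 1" by auto
      then show ?thesis using less.IH[of "n-2"] False by fastforce
    next
      case F: False
      from Fib_words_butlast[OF less.prems _ F] False
      have "butlast w \<in> Fib_words (n-1) k" by auto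
      then show ?thesis using less.IH[of "n-1"] False by fastforce
    qed
  qed
qed

lemma Fib_words_split:
  assumes "n \<ge> 2" "k \<ge> 1"
  shows "Fib_words n k
    = (\<lambda>u. u @ [False, True]) ` Fib_words (n-2) (k-1) \<union> (\<lambda>u. u @ [False]) ` Fib_words (n-1) k"
    (is "_ = ?R")
proof
  show "Fib_words n k \<subseteq> ?R"
  proof
    fix u assume u: "u \<in> Fib_words n k"
    show "u \<in> ?R"
    proof (cases "last u")
      case True
      from Fib_words_take[OF u assms(1) True] show ?thesis by blast
    next
      case False
      have "1 \<le> n" using assms by simp
      from Fib_words_butlast[OF u this False] show ?thesis by blast
    qed
  qed
next
  have e1: "n - 2 + 2 = n" "Suc (k - 1) = k" "Suc (n - 1) = n" using assms by auto
  show "?R \<subseteq> Fib_words n k"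
  proof
    fix v assume "v \<in> ?R"
    then consider x where "x \<in> Fib_words (n-2) (k-1)" "v = x @ [False, True]"
      | x where "x \<in> Fib_words (n-1) k" "v = x @ [False]" by blast
    then show "v \<in> Fib_words n k"
    proof cases
      case 1
      then have "x @ [False, True] \<in> Fib_words (n - 2 + 2) (Suc (k - 1))"
        using append_False_True_in_Fib_words_iff[of x "n-2" "k-1"] length_Fib_words by blast
      then show ?thesis using 1 e1 by simp
    next
      case 2
      then have "x @ [False] \<in> Fib_words (Suc (n - 1)) k"
        using append_False_in_Fib_words_iff[of x "n-1" k] length_Fib_words by blast
      then show ?thesis using 2 e1 by simp
    qed
  qed
qed

lemma nth_append_False: "length x = m \<Longrightarrow> p < Suc m \<Longrightarrow> (x @ [False]) ! p = (p < m \<and> x ! p)"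
  by (auto simp: nth_append)

lemma nth_append_False_True:
  "length x = m \<Longrightarrow> p < m + 2 \<Longrightarrow> (x @ [False, True]) ! p = (if p < m then x ! p else p = Suc m)"
  by (auto simp: nth_append nth_Cons' less_Suc_eq)

lemma last_conv_nth_length: "length u = n \<Longrightarrow> n \<ge> 1 \<Longrightarrow> last u = u ! (n - 1)"
  by (cases u rule: rev_cases) (auto simp: nth_append)

text \<open>\<open>top_word m j\<close> is \<open>0\<dots>0101\<dots>01\<close> and \<open>packed_word m j\<close> is \<open>1010\<dots>10\<dots>0\<close>, with \<open>j\<close> ones
  when \<open>2j \<le> m + 1\<close>.\<close>

definition top_word :: "nat \<Rightarrow> nat \<Rightarrow> bool list" where
  "top_word m j = map (\<lambda>i. m - 2*j \<le> i \<and> odd (m - i)) [0..<m]"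

definition packed_word :: "nat \<Rightarrow> nat \<Rightarrow> bool list" where
  "packed_word m j = map (\<lambda>i. i < 2*j \<and> even i) [0..<m]"

definition shifted_top :: "nat \<Rightarrow> nat \<Rightarrow> nat \<Rightarrow> bool list" where
  "shifted_top m j d = top_word (m - d) j @ replicate d False"

text \<open>The last word of the greedy list started at \<open>top_word n k\<close>.\<close>

definition top_greedy_end :: "nat \<Rightarrow> nat \<Rightarrow> bool list" where
  "top_greedy_end n k = (if even k then packed_word n k
     else if n + 1 = 2*k then top_word n k else top_word (n-1) k @ [False])"

lemma length_top_word[simp]: "length (top_word m j) = m" by (simp add: top_word_def)

lemma length_packed_word[simp]: "length (packed_word m j) = m" by (simp add: packed_word_def)

lemma nth_top_word: "i < m \<Longrightarrow> top_word m j ! i = (m - 2*j \<le> i \<and> odd (m - i))"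
  by (simp add: top_word_def)

lemma nth_packed_word: "i < m \<Longrightarrow> packed_word m j ! i = (i < 2*j \<and> even i)"
  by (simp add: packed_word_def)

lemma top_word_Suc: "top_word (m+2) (Suc j) = top_word m j @ [False, True]"
  by (rule nth_equalityI) (auto simp: nth_top_word nth_append nth_Cons' less_Suc_eq)

lemma packed_word_Suc: "packed_word (Suc m) j = packed_word m j @ [m < 2*j \<and> even m]"
  by (simp add: packed_word_def)

lemma packed_word_0: "packed_word m 0 = top_word m 0"
  by (rule nth_equalityI) (auto simp: nth_top_word nth_packed_word)

lemma top_word_0: "top_word m 0 = replicate m False"
  by (rule nth_equalityI) (auto simp: nth_top_word)

lemma shifted_top_0: "shifted_top m j 0 = top_word m j" by (simp add: shifted_top_def)

lemma shifted_top_Suc: "shifted_top (Suc m) j (Suc d) = shifted_top m j d @ [False]"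
  by (simp add: shifted_top_def replicate_append_same[symmetric])

lemma last_top_word: "1 \<le> j \<Longrightarrow> 1 \<le> m \<Longrightarrow> last (top_word m j) = True"
proof -
  assume a: "1 \<le> j" "1 \<le> m"
  then have "top_word m j \<noteq> []" using length_top_word[of m j]
    by (metis list.size(3) not_one_le_zero)
  then have "last (top_word m j) = top_word m j ! (m - 1)" by (simp add: last_conv_nth)
  also have "\<dots> = True" using a by (simp add: nth_top_word)
  finally show ?thesis .
qed

lemma nth_shifted_top:
  "i < m \<Longrightarrow> d \<le> m \<Longrightarrow> shifted_top m j d ! i = (i < m - d \<and> top_word (m - d) j ! i)"
  by (auto simp: shifted_top_def nth_append)

lemma length_shifted_top: "d \<le> m \<Longrightarrow> length (shifted_top m j d) = m" by (simp add: shifted_top_def)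

lemma last_shifted_top_Suc: "last (shifted_top m j (Suc d)) = False"
proof -
  have "shifted_top m j (Suc d) = (top_word (m - Suc d) j @ replicate d False) @ [False]"
    by (simp add: shifted_top_def replicate_append_same[symmetric])
  then show ?thesis by simp
qed

lemma packed_word_eq_top_word: "n + 1 = 2*k \<Longrightarrow> packed_word n k = top_word n k"
proof (rule nth_equalityI)
  assume a: "n + 1 = 2*k"
  show "length (packed_word n k) = length (top_word n k)" by simp
  fix i assume "i < length (packed_word n k)"
  then have i: "i < n" by simp
  have "(i < 2*k \<and> even i) = (n - 2*k \<le> i \<and> odd (n - i))" using a i by presburger
  then show "packed_word n k ! i = top_word n k ! i" using i
    by (simp add: nth_packed_word nth_top_word)
qed

lemma packed_word_ne_top_word:
  assumes "2*j \<le> m" "j \<ge> 1" shows "packed_word m j \<noteq> top_word m j"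
proof
  assume e: "packed_word m j = top_word m j"
  have m: "0 < m" using assms by simp
  have "packed_word m j ! 0" using m assms by (simp add: nth_packed_word)
  then have "top_word m j ! 0" using e by simp
  then have "m - 2*j \<le> 0" "odd (m - 0)" using m by (simp_all add: nth_top_word)
  then have "m = 2*j" "odd m" using assms by auto
  then show False by simp
qed

lemma Fib_words_weight_0_eq_top: "w \<in> Fib_words n 0 \<Longrightarrow> w = top_word n 0"
  by (auto simp: Fib_words_def weight_def count_list_0_iff top_word_0 intro!: nth_equalityI)
    (metis (full_types) nth_mem)

lemma Fib_words_max_weight_eq_top: "n + 1 = 2*k \<Longrightarrow> w \<in> Fib_words n k \<Longrightarrow> w = top_word n k"
proof (induction n arbitrary: w k rule: less_induct)
  case (less n)
  show ?case
  proof (cases "n \<le> 1")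
    case True
    have nk: "n = 1" "k = 1" using less.prems(1) True by arith+
    have len: "length w = 1" using less.prems(2) nk by (simp add: Fib_words_def)
    have wt: "count_list w True = 1" using less.prems(2) nk by (simp add: Fib_words_def weight_def)
    obtain a where wa: "w = [a]" using len by (cases w) auto
    have "w = [True]" using wt wa by (cases a) auto
    moreover have "top_word 1 1 = [True]" by (simp add: top_word_def)
    ultimately show ?thesis using nk by simp
  next
    case False
    show ?thesis
    proof (cases "last w")
      case True
      from Fib_words_take[OF less.prems(2) _ True] False
      have e: "w = take (n-2) w @ [False, True]" and f: "take (n-2) w \<in> Fib_words (n-2) (k-1)" and k: "k \<ge> 1"
        by auto
      have "(n-2) + 1 = 2*(k-1)" using less.prems False k by auto
      moreover have "n - 2 < n" using False by simp
      ultimately have "take (n-2) w = top_word (n-2) (k-1)" using less.IH f by blast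
      then have "w = top_word (n-2) (k-1) @ [False, True]" using e by simp
      also have "\<dots> = top_word ((n-2)+2) (Suc (k-1))" by (rule top_word_Suc[symmetric])
      also have "(n-2)+2 = n" using False by simp
      also have "Suc (k-1) = k" using k by simp
      finally show ?thesis .
    next
      case F: False
      from Fib_words_butlast[OF less.prems(2) _ F] False
      have "butlast w \<in> Fib_words (n-1) k" by auto
      then have "2*k \<le> (n - 1) + 1" by (rule Fib_words_weight_bound)
      with less.prems(1) have False by arith
      then show ?thesis ..
    qed
  qed
qed

lemma Fib_words_weight_0: "Fib_words n 0 = {top_word n 0}"
proof -
  have "top_word n 0 \<in> Fib_words n 0"
    by (simp add: Fib_words_def top_word_0 weight_def count_list_0_iff)
  then show ?thesis using Fib_words_weight_0_eq_top by blast
qed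

lemma Fib_words_max_weight: "n + 1 = 2*k \<Longrightarrow> w \<in> Fib_words n k \<Longrightarrow> Fib_words n k = {top_word n k}"
  using Fib_words_max_weight_eq_top by blast

lemma top_word_eq_append:
  assumes "1 \<le> k" "2*k \<le> n"
  shows "top_word n k = top_word (n-2) (k-1) @ [False, True]"
proof -
  have "n = (n-2) + 2" "k = Suc (k-1)" using assms by arith+
  then show ?thesis using top_word_Suc[of "n-2" "k-1"] by metis
qed

lemma last_packed_word: "2*j \<le> m \<Longrightarrow> 0 < m \<Longrightarrow> \<not> last (packed_word m j)"
  using packed_word_Suc[of "m - 1" j] by (cases m) auto

lemma last_shifted_top: "last (shifted_top m j d) \<Longrightarrow> d = 0"
  using last_shifted_top_Suc by (cases d) auto

lemma top_greedy_end_cases: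
  assumes "2*k \<le> m + 1"
  obtains "top_greedy_end m k = top_word m k"
    | "odd k" "2*k \<le> m" "top_greedy_end m k = top_word (m - 1) k @ [False]"
    | "even k" "top_greedy_end m k = packed_word m k"
  using assms that by (cases "even k"; cases "m + 1 = 2*k") (auto simp: top_greedy_end_def)

section \<open>Greedy lists of words ending in 0 and in 01\<close>

lemma hom_trans_ok_append_False_outside:
  assumes len: "length w = m" and ok: "hom_trans_ok (w @ [False]) i j" and nl: "\<not> (i < m \<and> j < m)"
  shows "j = m \<and> i < m \<and> w ! i \<and> (\<forall>p. i < p \<and> p < m \<longrightarrow> \<not> w ! p)"
proof -
  have a: "i < Suc m" "j < Suc m" "(w @ [False]) ! i" "\<not> (w @ [False]) ! j"
    "\<forall>p. min i j < p \<and> p < max i j \<longrightarrow> \<not> (w @ [False]) ! p"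
    using ok len by (auto simp: hom_trans_ok_def)
  have im: "i < m" using a(1,3) len by (cases "i = m") (auto simp: nth_append)
  then have jm: "j = m" using nl a(2) by simp
  have wi: "w ! i" using a(3) im len by (simp add: nth_append)
  have "\<forall>p. i < p \<and> p < m \<longrightarrow> \<not> w ! p"
  proof (intro allI impI)
    fix p assume p: "i < p \<and> p < m"
    then have "\<not> (w @ [False]) ! p" using a(5) im jm by auto
    then show "\<not> w ! p" using p len by (simp add: nth_append)
  qed
  then show ?thesis using im jm wi by simp
qed

lemma greedy_cands_append_False_True_outside:
  assumes len: "length w = m" and c: "(i, j) \<in> greedy_cands (Fib_words (m+2) k) L (w @ [False, True])"
    and nl: "\<not> (i < m \<and> j < m)"
  shows "i = Suc m"
proof -
  have ok: "hom_trans_ok (w @ [False, True]) i j" and inS: "hom_trans (w @ [False, True]) i j \<in> Fib_words (m+2) k"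
    using c by (auto simp: greedy_cands_def)
  have a: "i < m + 2" "j < m + 2" "(w @ [False, True]) ! i" "\<not> (w @ [False, True]) ! j" "i \<noteq> j"
    using ok len by (auto simp: hom_trans_ok_def)
  have "i \<noteq> m" using a(3) len by (auto simp: nth_append)
  moreover have "j \<noteq> Suc m" using a(4) len by (auto simp: nth_append)
  moreover have "\<not> (i < m)"
  proof
    assume im: "i < m"
    then have jm: "j = m" using nl a(2) \<open>j \<noteq> Suc m\<close> by arith
    let ?t = "hom_trans (w @ [False, True]) i j"
    have "?t ! m" using jm im len by (simp add: nth_hom_trans)
    moreover have "?t ! Suc m" using jm im len by (simp add: nth_hom_trans nth_append)
    moreover have "\<not> (?t ! m \<and> ?t ! Suc m)" using inS by (simp add: Fib_words_def)
    ultimately show False by simp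
  qed
  ultimately show ?thesis using a(1) by arith
qed

lemma is_greedy_run_Fgreedy:
  assumes "a \<in> Fib_words n k"
  shows "is_greedy_run (Fib_words n k) (Fgreedy n k a)" "hd (Fgreedy n k a) = a"
    "set (Fgreedy n k a) \<subseteq> Fib_words n k" "Fgreedy n k a \<noteq> []"
  using is_greedy_run_greedy[OF finite_Fib_words assms]
  by (simp_all add: Fgreedy_def is_greedy_run_def)

lemma last_Fgreedy_in: "a \<in> Fib_words n k \<Longrightarrow> last (Fgreedy n k a) \<in> Fib_words n k"
  using is_greedy_run_Fgreedy[of a n k] last_in_set by blast

lemma length_Fgreedy_in: "a \<in> Fib_words n k \<Longrightarrow> u \<in> set (Fgreedy n k a) \<Longrightarrow> length u = n"
  using is_greedy_run_Fgreedy(3) length_Fib_words by blast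

lemma greedy_steps_Fgreedy_append_False:
  assumes a: "a \<in> Fib_words m k" and fresh: "\<forall>u\<in>set V. \<forall>x. u \<noteq> x @ [False]"
  shows "greedy_steps (Fib_words (Suc m) k) V (map (\<lambda>u. u @ [False]) (Fgreedy m k a))"
proof (rule greedy_steps_map_append[OF _ fresh])
  fix w L i j assume len: "length w = m" and nl: "\<not> (i < m \<and> j < m)"
    and c: "(i, j) \<in> greedy_cands (Fib_words (Suc m) k) L (w @ [False])"
  from c have "hom_trans_ok (w @ [False]) i j" by (simp add: greedy_cands_def)
  from hom_trans_ok_append_False_outside[OF len this nl]
  show "\<forall>i'<m. w ! i' \<longrightarrow> i' < i \<or> (i' = i \<and> m \<le> j)" by (metis linorder_neqE_nat order_refl)
next
  show "\<forall>x. length x = m \<longrightarrow> (x @ [False] \<in> Fib_words (Suc m) k \<longleftrightarrow> x \<in> Fib_words m k)"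
    using append_False_in_Fib_words_iff by blast
qed (use is_greedy_run_Fgreedy(1)[OF a] length_Fgreedy_in[OF a] in \<open>auto simp: is_greedy_run_def\<close>)

lemma greedy_steps_Fgreedy_append_False_True:
  assumes a: "a \<in> Fib_words m k" and fresh: "\<forall>u\<in>set V. \<forall>x. u \<noteq> x @ [False, True]"
  shows "greedy_steps (Fib_words (m+2) (Suc k)) V (map (\<lambda>u. u @ [False, True]) (Fgreedy m k a))"
proof (rule greedy_steps_map_append[OF _ fresh])
  fix w L i j assume len: "length w = m" and nl: "\<not> (i < m \<and> j < m)"
    and c: "(i, j) \<in> greedy_cands (Fib_words (m+2) (Suc k)) L (w @ [False, True])"
  from greedy_cands_append_False_True_outside[OF len c nl]
  show "\<forall>i'<m. w ! i' \<longrightarrow> i' < i \<or> (i' = i \<and> m \<le> j)" by simp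
next
  show "\<forall>x. length x = m \<longrightarrow> (x @ [False, True] \<in> Fib_words (m+2) (Suc k) \<longleftrightarrow> x \<in> Fib_words m k)"
    using append_False_True_in_Fib_words_iff by blast
qed (use is_greedy_run_Fgreedy(1)[OF a] length_Fgreedy_in[OF a] in \<open>auto simp: is_greedy_run_def\<close>)

lemma greedy_cands_Fgreedy_append_False:
  assumes a: "a \<in> Fib_words m k" and fresh: "\<forall>u\<in>set V. \<forall>x. u \<noteq> x @ [False]"
    and c: "(i, j) \<in> greedy_cands (Fib_words (Suc m) k)
      (V @ map (\<lambda>u. u @ [False]) (Fgreedy m k a)) (last (Fgreedy m k a) @ [False])"
  shows "j = m \<and> i < m \<and> last (Fgreedy m k a) ! i
    \<and> (\<forall>p. i < p \<and> p < m \<longrightarrow> \<not> last (Fgreedy m k a) ! p)"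
proof -
  have len: "length (last (Fgreedy m k a)) = m" using last_Fgreedy_in[OF a] length_Fib_words
    by blast
  have "\<not> (i < m \<and> j < m)"
  proof (rule greedy_cands_append_stuck[OF _ fresh len _ c])
    show "\<forall>x. length x = m \<longrightarrow> (x @ [False] \<in> Fib_words (Suc m) k \<longleftrightarrow> x \<in> Fib_words m k)"
      using append_False_in_Fib_words_iff by blast
    show "greedy_next (Fib_words m k) (Fgreedy m k a) (last (Fgreedy m k a)) = None"
      using is_greedy_run_Fgreedy(1)[OF a] by (simp add: is_greedy_run_def)
  qed
  moreover have "hom_trans_ok (last (Fgreedy m k a) @ [False]) i j" using c
    by (simp add: greedy_cands_def)
  ultimately show ?thesis using hom_trans_ok_append_False_outside[OF len] by blast
qed

lemma greedy_cands_Fgreedy_append_False_True: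
  assumes a: "a \<in> Fib_words m k" and fresh: "\<forall>u\<in>set V. \<forall>x. u \<noteq> x @ [False, True]"
    and c: "(i, j) \<in> greedy_cands (Fib_words (m+2) (Suc k))
      (V @ map (\<lambda>u. u @ [False, True]) (Fgreedy m k a)) (last (Fgreedy m k a) @ [False, True])"
  shows "i = Suc m"
proof -
  have len: "length (last (Fgreedy m k a)) = m" using last_Fgreedy_in[OF a] length_Fib_words
    by blast
  have "\<not> (i < m \<and> j < m)"
  proof (rule greedy_cands_append_stuck[OF _ fresh len _ c])
    show "\<forall>x. length x = m \<longrightarrow> (x @ [False, True] \<in> Fib_words (m+2) (Suc k) \<longleftrightarrow> x \<in> Fib_words m k)"
      using append_False_True_in_Fib_words_iff by blast
    show "greedy_next (Fib_words m k) (Fgreedy m k a) (last (Fgreedy m k a)) = None"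
      using is_greedy_run_Fgreedy(1)[OF a] by (simp add: is_greedy_run_def)
  qed
  then show ?thesis by (rule greedy_cands_append_False_True_outside[OF len c])
qed

section \<open>The transition between the two blocks\<close>

text \<open>The final 1 can only move one step to the left, next to the last 1 of \<open>top_word (n-2) (k-1)\<close>.\<close>

lemma top_word_last_one_stuck:
  assumes k2: "k \<ge> 2" and n: "2*k \<le> n"
    and c: "(i, j) \<in> greedy_cands (Fib_words n k) L (top_word (n-2) (k-1) @ [False, True])"
    and i: "i = n - 1"
  shows False
proof -
  define m where "m = n - 2"
  define w where "w = top_word m (k-1)"
  have m2: "m \<ge> 2" using n k2 by (simp add: m_def)
  have nm: "n = m + 2" using n k2 by (simp add: m_def)
  have lw: "length w = m" by (simp add: w_def)
  have wlast: "w ! (m-1)" using k2 m2 by (simp add: w_def nth_top_word)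
  have c': "(i, j) \<in> greedy_cands (Fib_words n k) L (w @ [False, True])" using c
    by (simp add: w_def m_def)
  have ok: "hom_trans_ok (w @ [False, True]) i j" and inS: "hom_trans (w @ [False, True]) i j \<in> Fib_words n k"
    using c' by (auto simp: greedy_cands_def)
  have jb: "j < m + 2" "\<not> (w @ [False, True]) ! j" "i \<noteq> j"
    and btw: "\<forall>p. min i j < p \<and> p < max i j \<longrightarrow> \<not> (w @ [False, True]) ! p"
    using ok lw nm by (auto simp: hom_trans_ok_def)
  have wl2: "(w @ [False, True]) ! (m - 1)" using wlast lw m2 by (simp add: nth_append)
  have jm: "j = m"
  proof -
    have "j \<noteq> Suc m" using jb(3) i nm by simp
    moreover have "\<not> j < m - 1"
    proof
      assume "j < m - 1"
      then have "min i j < m - 1 \<and> m - 1 < max i j" using i nm m2 by simp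
      then show False using btw wl2 by blast
    qed
    moreover have "j \<noteq> m - 1" using jb(2) wl2 by auto
    ultimately show ?thesis using jb(1) by arith
  qed
  let ?t = "hom_trans (w @ [False, True]) i j"
  have t1: "?t ! m" using jm i lw nm by (simp add: nth_hom_trans)
  have t2: "?t ! (m - 1)" using jm i lw wl2 m2 nm by (simp add: nth_hom_trans)
  have adj: "\<forall>p. Suc p < n \<longrightarrow> \<not> (?t ! p \<and> ?t ! Suc p)" using inS by (simp add: Fib_words_def)
  have sm: "Suc (m - 1) = m" using m2 by simp
  have "Suc (m - 1) < n" using m2 nm by simp
  then have "\<not> (?t ! (m - 1) \<and> ?t ! Suc (m - 1))" using adj by blast
  then show False using t1 t2 sm by simp
qed

lemma hom_trans_top_word_to_end:
  assumes k: "k \<ge> 2" and n: "2*k \<le> n"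
  shows "hom_trans (top_word (n-1) k @ [False]) (n-2) (n-1)
    = shifted_top (n-2) (k-1) 1 @ [False, True]" (is "?l = ?r")
proof (rule nth_equalityI)
  show "length ?l = length ?r"
    using n k by (simp add: length_shifted_top)
  fix p assume "p < length ?l"
  then have p: "p < n" using n k by simp
  have l: "length (top_word (n-1) k @ [False]) = n" using n k by simp
  have lhs: "?l ! p
      = (p = n - 1 \<or> (p \<noteq> n - 2 \<and> (top_word (n-1) k @ [False]) ! p))"
    using p l n k by (auto simp: nth_hom_trans)
  have rhs: "?r ! p = (if p < n - 2 then shifted_top (n-2) (k-1) 1 ! p else p = Suc (n-2))"
    by (rule nth_append_False_True) (use n k p in \<open>simp_all add: length_shifted_top\<close>)
  consider "p < n - 3" | "p = n - 3" | "p = n - 2" | "p = n - 1" using p by arith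
  then show "?l ! p = ?r ! p"
  proof cases
    case 1
    have pl: "p < n - 1" using 1 by arith
    have a1: "(top_word (n-1) k @ [False]) ! p = (n - 1 - 2*k \<le> p \<and> odd (n - 1 - p))"
      using pl by (simp add: nth_append nth_top_word)
    have a2: "shifted_top (n-2) (k-1) 1 ! p = (n - 3 - 2*(k-1) \<le> p \<and> odd (n - 3 - p))"
      using 1 n k by (simp add: nth_shifted_top nth_top_word numeral_3_eq_3)
    have e1: "n - 3 - 2*(k-1) = n - 1 - 2*k" using n k by arith
    have "n - 1 - p = Suc (Suc (n - 3 - p))" using 1 by arith
    then have e2: "odd (n - 3 - p) = odd (n - 1 - p)" by simp
    have ne: "p \<noteq> n - 1" "p \<noteq> n - 2" "p < n - 2" using 1 by arith+
    show ?thesis using lhs rhs a1 a2 e1 e2 ne by simp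
  next
    case 2
    have ne: "p \<noteq> n - 1" "p \<noteq> n - 2" "p < n - 2" "p < n - 1" using 2 n k by arith+
    have a1: "\<not> (top_word (n-1) k @ [False]) ! p" using 2 ne by (simp add: nth_append nth_top_word)
    have a2: "\<not> shifted_top (n-2) (k-1) 1 ! p" using 2 n k by (simp add: nth_shifted_top)
    show ?thesis using lhs rhs a1 a2 ne by simp
  next
    case 3
    have ne: "p \<noteq> n - 1" "\<not> p < n - 2" "p \<noteq> Suc (n - 2)" using 3 n k by arith+
    show ?thesis using lhs rhs ne 3 by simp
  next
    case 4
    have ne: "p \<noteq> n - 2" "\<not> p < n - 2" "p = Suc (n - 2)" using 4 n k by arith+
    show ?thesis using lhs rhs ne 4 by simp
  qed
qed

lemma hom_trans_top_word_False_to_end: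
  assumes k: "k \<ge> 2" and n: "2*k + 1 \<le> n"
  shows "hom_trans ((top_word (n-2) k @ [False]) @ [False]) (n-3) (n-1)
    = shifted_top (n-2) (k-1) 2 @ [False, True]" (is "?l = ?r")
proof (rule nth_equalityI)
  show "length ?l = length ?r"
    using n k by (simp add: length_shifted_top)
  fix p assume "p < length ?l"
  then have p: "p < n" using n k by simp
  have l: "length ((top_word (n-2) k @ [False]) @ [False]) = n" using n k by simp
  have wn: "((top_word (n-2) k @ [False]) @ [False]) ! p = (p < n - 2 \<and> n - 2 - 2*k \<le> p \<and> odd (n - 2 - p))"
  proof -
    have l1: "length (top_word (n-2) k) = n - 2" by simp
    consider "p < n - 2" | "p = n - 2" | "p = n - 1" using p by arith
    then show ?thesis
    proof cases
      case 1 then show ?thesis by (simp add: nth_append nth_top_word)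
    next
      case 2 then show ?thesis using n by (simp add: nth_append)
    next
      case 3
      then have "p = Suc (n - 2)" using n k by arith
      then show ?thesis using n by (simp add: nth_append)
    qed
  qed
  have lhs: "?l ! p
      = (p = n - 1 \<or> (p \<noteq> n - 3 \<and> ((top_word (n-2) k @ [False]) @ [False]) ! p))"
    using p l n k by (auto simp: nth_hom_trans)
  have rhs: "?r ! p = (if p < n - 2 then shifted_top (n-2) (k-1) 2 ! p else p = Suc (n-2))"
    by (rule nth_append_False_True) (use n k p in \<open>simp_all add: length_shifted_top\<close>)
  consider "p < n - 4" | "p = n - 4" | "p = n - 3" | "p = n - 2" | "p = n - 1" using p by arith
  then show "?l ! p = ?r ! p"
  proof cases
    case 1
    have a2: "shifted_top (n-2) (k-1) 2 ! p = (n - 4 - 2*(k-1) \<le> p \<and> odd (n - 4 - p))"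
      using 1 n k by (simp add: nth_shifted_top nth_top_word)
    have e1: "n - 4 - 2*(k-1) = n - 2 - 2*k" using n k by arith
    have "n - 2 - p = Suc (Suc (n - 4 - p))" using 1 by arith
    then have e2: "odd (n - 4 - p) = odd (n - 2 - p)" by simp
    have ne: "p \<noteq> n - 1" "p \<noteq> n - 3" "p < n - 2" using 1 by arith+
    show ?thesis using lhs rhs wn a2 e1 e2 ne by simp
  next
    case 2
    have ne: "p \<noteq> n - 1" "p \<noteq> n - 3" "p < n - 2" "n - 2 - p = 2" using 2 n k by arith+
    have a2: "\<not> shifted_top (n-2) (k-1) 2 ! p" using 2 n k by (simp add: nth_shifted_top)
    have w0: "\<not> ((top_word (n-2) k @ [False]) @ [False]) ! p" using wn[unfolded ne(4)] by simp
    show ?thesis using lhs rhs w0 a2 ne by simp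
  next
    case 3
    have ne: "p \<noteq> n - 1" "p < n - 2" using 3 n k by arith+
    have "\<not> p < n - 2 - 2" "p < n - 2" "2 \<le> n - 2" using 3 n k by arith+
    then have a2: "\<not> shifted_top (n-2) (k-1) 2 ! p" using nth_shifted_top[of p "n-2" 2 "k-1"]
      by simp
    show ?thesis using lhs rhs a2 ne 3 by simp
  next
    case 4
    have ne: "p \<noteq> n - 1" "\<not> p < n - 2" "p \<noteq> Suc (n - 2)" using 4 n k by arith+
    show ?thesis using lhs rhs wn ne 4 by simp
  next
    case 5
    have ne: "\<not> p < n - 2" "p = Suc (n - 2)" using 5 n k by arith+
    show ?thesis using lhs rhs ne 5 by simp
  qed
qed

lemma hom_trans_packed_word_to_end:
  assumes k: "k \<ge> 1" and n: "2*k \<le> n"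
  shows "hom_trans (packed_word (n-1) k @ [False]) (2*k-2) (n-1)
    = packed_word (n-2) (k-1) @ [False, True]" (is "?l = ?r")
proof (rule nth_equalityI)
  show "length ?l = length ?r"
    using n k by simp
  fix p assume "p < length ?l"
  then have p: "p < n" using n k by simp
  have l: "length (packed_word (n-1) k @ [False]) = n" using n k by simp
  have wn: "(packed_word (n-1) k @ [False]) ! p = (p < n - 1 \<and> p < 2*k \<and> even p)"
    using p n k by (auto simp: nth_append nth_packed_word)
  have lhs: "?l ! p
      = (p = n - 1 \<or> (p \<noteq> 2*k-2 \<and> (packed_word (n-1) k @ [False]) ! p))"
    using p l n k by (auto simp: nth_hom_trans)
  have rhs: "?r ! p = (if p < n - 2 then packed_word (n-2) (k-1) ! p else p = Suc (n-2))"
    by (rule nth_append_False_True) (use n k p in simp_all)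
  consider "p = n - 1" | "p = 2*k - 2" | "p < n - 2 \<and> p \<noteq> 2*k-2" | "p = n - 2 \<and> p \<noteq> 2*k-2"
    using p n k by arith
  then show "?l ! p = ?r ! p"
  proof cases
    case 1
    have ne: "\<not> p < n - 2" "p = Suc (n - 2)" using 1 n k by arith+
    show ?thesis using lhs rhs ne 1 by simp
  next
    case 2
    have ne: "p \<noteq> n - 1" "p \<noteq> Suc (n - 2)" using 2 n k by arith+
    have "\<not> (p < n - 2 \<and> packed_word (n-2) (k-1) ! p)" using 2 by (auto simp: nth_packed_word)
    then show ?thesis using lhs rhs ne 2 by auto
  next
    case 3
    have ne: "p \<noteq> n - 1" "p < n - 1" using 3 n k by arith+
    have "(p < 2*k \<and> even p) = (p < 2*(k-1) \<and> even p)" using 3 k by presburger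
    then show ?thesis using lhs rhs wn ne 3 by (simp add: nth_packed_word)
  next
    case 4
    have ne: "p \<noteq> n - 1" "p < n - 1" "\<not> p < n - 2" "p \<noteq> Suc (n - 2)" using 4 n k by arith+
    have "\<not> (p < 2*k \<and> even p)" using 4 n k by presburger
    then show ?thesis using lhs rhs wn ne 4 by simp
  qed
qed

lemma greedy_next_packed_end:
  assumes k: "k \<ge> 1" "odd k" and n: "2*k \<le> n"
    and wS: "packed_word (n-2) (k-1) @ [False, True] \<in> Fib_words n k"
    and L1: "\<forall>u \<in> set L1. last u"
    and onlyi: "\<And>i j. (i, j) \<in> greedy_cands (Fib_words n k) L1 (packed_word (n-2) (k-1) @ [False, True])
      \<Longrightarrow> i = n-1"
  shows "greedy_next (Fib_words n k) L1 (packed_word (n-2) (k-1) @ [False, True])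
    = Some (packed_word (n-1) k @ [False])"
proof -
  define w where "w = packed_word (n-2) (k-1) @ [False, True]"
  have lw: "length w = n" using n k by (simp add: w_def)
  have wn: "w ! p = ((p < 2*k-2 \<and> even p) \<or> p = n-1)" if "p < n" for p
    using that n k by (auto simp: w_def nth_append_False_True nth_packed_word)
  define i0 where "i0 = n - 1"
  define j0 where "j0 = 2*k - 2"
  have ij: "i0 < n" "j0 < n" "i0 \<noteq> j0" using n k by (auto simp: i0_def j0_def)
  have ok: "hom_trans_ok w i0 j0"
    unfolding hom_trans_ok_def using ij lw wn by (auto simp: i0_def j0_def)
  define t where "t = hom_trans w i0 j0"
  have lt: "length t = n" using lw by (simp add: t_def)
  have tn: "t ! p = (p = j0 \<or> (p \<noteq> i0 \<and> w ! p))" if "p < n" for p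
    using that lw ij by (auto simp: t_def nth_hom_trans)
  have tS: "t \<in> Fib_words n k" unfolding t_def w_def
  proof (rule hom_trans_in_Fib_words[OF wS])
    show "hom_trans_ok (packed_word (n - 2) (k - 1) @ [False, True]) i0 j0" using ok
      by (simp add: w_def)
    show "Suc j0 < n \<Longrightarrow> Suc j0 = i0 \<or> \<not> (packed_word (n - 2) (k - 1) @ [False, True]) ! Suc j0"
      using wn[of "Suc j0"] by (auto simp: w_def j0_def i0_def)
    show "0 < j0 \<Longrightarrow> j0 - 1 = i0 \<or> \<not> (packed_word (n - 2) (k - 1) @ [False, True]) ! (j0 - 1)"
      using wn[of "j0 - 1"] ij by (auto simp: w_def j0_def i0_def)
  qed
  have tlast: "\<not> last t" using last_conv_nth_length[OF lt] tn[of "n-1"] n k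
    by (simp add: i0_def j0_def)
  have tnot: "t \<notin> set L1" using L1 tlast by auto
  have cand: "(i0, j0) \<in> greedy_cands (Fib_words n k) L1 w"
    using ok tS tnot by (simp add: greedy_cands_def t_def)
  have imin: "i0 \<le> i'" if "(i', j') \<in> greedy_cands (Fib_words n k) L1 w" for i' j'
    using onlyi[of i' j'] that by (simp add: w_def i0_def)
  have jmin: "j0 \<le> j'" if c: "(i0, j') \<in> greedy_cands (Fib_words n k) L1 w" for j'
  proof (rule ccontr)
    assume "\<not> j0 \<le> j'"
    then have jl: "j' < 2*k - 2" by (simp add: j0_def)
    have ok': "hom_trans_ok w i0 j'" and inS': "hom_trans w i0 j' \<in> Fib_words n k"
      using c by (auto simp: greedy_cands_def)
    have nj: "\<not> w ! j'" using ok' by (simp add: hom_trans_ok_def)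
    have btw: "\<forall>p. j' < p \<and> p < i0 \<longrightarrow> \<not> w ! p" using ok' jl ij
      by (auto simp: hom_trans_ok_def i0_def j0_def)
    have oj: "odd j'" using nj wn[of j'] jl n by auto
    have "\<not> w ! Suc j'" using btw jl n k by (auto simp: i0_def)
    then have "Suc j' = 2*k - 2" using wn[of "Suc j'"] jl oj n by auto
    then have j'e: "j' = 2*k - 3" and k2: "k \<ge> 2" by auto
    let ?t = "hom_trans w i0 j'"
    have adj: "\<forall>p. Suc p < n \<longrightarrow> \<not> (?t ! p \<and> ?t ! Suc p)" using inS' by (simp add: Fib_words_def)
    have "?t ! (2*k - 4)" using wn[of "2*k-4"] j'e k2 n lw by (auto simp: nth_hom_trans i0_def)
    moreover have "?t ! (2*k - 3)" using j'e k2 n lw by (auto simp: nth_hom_trans i0_def)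
    moreover have "Suc (2*k - 4) = 2*k - 3" "Suc (2*k - 4) < n" using k2 n by auto
    ultimately show False using adj by metis
  qed
  have "greedy_next (Fib_words n k) L1 w = Some t"
    unfolding t_def by (rule greedy_next_eqI[OF cand]) (use imin jmin in auto)
  moreover have "t = packed_word (n-1) k @ [False]"
  proof -
    let ?u = "packed_word (n-1) k @ [False]"
    have "w = hom_trans ?u j0 i0"
      using hom_trans_packed_word_to_end[OF k(1) n] by (simp add: w_def i0_def j0_def)
    moreover have "j0 < length ?u" "i0 < length ?u" "?u ! j0" "\<not> ?u ! i0"
      using n k by (auto simp: i0_def j0_def nth_append nth_packed_word)
    ultimately show ?thesis by (simp add: t_def hom_trans_hom_trans)
  qed
  ultimately show ?thesis by (simp add: w_def)
qed

lemma greedy_next_top_end: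
  assumes k: "k \<ge> 2" "even k" and n: "2*k \<le> n"
    and wS: "(top_word (n-3) (k-1) @ [False]) @ [False, True] \<in> Fib_words n k"
    and L1: "\<forall>u \<in> set L1. last u"
    and onlyi: "\<And>i j. (i, j) \<in> greedy_cands (Fib_words n k) L1
      ((top_word (n-3) (k-1) @ [False]) @ [False, True]) \<Longrightarrow> i = n-1"
  shows "greedy_next (Fib_words n k) L1 ((top_word (n-3) (k-1) @ [False]) @ [False, True])
    = Some (top_word (n-1) k @ [False])"
proof -
  define w where "w = (top_word (n-3) (k-1) @ [False]) @ [False, True]"
  have lw: "length w = n" using n k by (simp add: w_def)
  have wn: "w ! p = ((n - 3 - 2*(k-1) \<le> p \<and> p < n - 3 \<and> odd (n - 3 - p)) \<or> p = n-1)" if "p < n" for p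
  proof -
    have l1: "length (top_word (n-3) (k-1) @ [False]) = n - 2" using n k by simp
    have "w ! p = (if p < n - 2 then (top_word (n-3) (k-1) @ [False]) ! p else p = Suc (n-2))"
      unfolding w_def by (rule nth_append_False_True[OF l1]) (use that n k in simp)
    then show ?thesis using that n k by (auto simp: nth_append_False nth_top_word nth_append)
  qed
  define i0 where "i0 = n - 1"
  define j0 where "j0 = n - 2"
  have ij: "i0 < n" "j0 < n" "i0 \<noteq> j0" using n k by (auto simp: i0_def j0_def)
  have ok: "hom_trans_ok w i0 j0"
    unfolding hom_trans_ok_def using ij lw wn by (auto simp: i0_def j0_def)
  define t where "t = hom_trans w i0 j0"
  have lt: "length t = n" using lw by (simp add: t_def)
  have tn: "t ! p = (p = j0 \<or> (p \<noteq> i0 \<and> w ! p))" if "p < n" for p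
    using that lw ij by (auto simp: t_def nth_hom_trans)
  have tS: "t \<in> Fib_words n k" unfolding t_def w_def
  proof (rule hom_trans_in_Fib_words[OF wS])
    show "hom_trans_ok ((top_word (n-3) (k-1) @ [False]) @ [False, True]) i0 j0" using ok
      by (simp add: w_def)
    show "Suc j0 < n \<Longrightarrow> Suc j0 = i0 \<or> \<not> ((top_word (n-3) (k-1) @ [False]) @ [False, True]) ! Suc j0"
      by (auto simp: j0_def i0_def)
    show "0 < j0 \<Longrightarrow> j0 - 1 = i0 \<or> \<not> ((top_word (n-3) (k-1) @ [False]) @ [False, True]) ! (j0 - 1)"
      using wn[of "j0 - 1"] ij n k by (auto simp: w_def j0_def i0_def)
  qed
  have tlast: "\<not> last t" using last_conv_nth_length[OF lt] tn[of "n-1"] n k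
    by (simp add: i0_def j0_def)
  have tnot: "t \<notin> set L1" using L1 tlast by auto
  have cand: "(i0, j0) \<in> greedy_cands (Fib_words n k) L1 w"
    using ok tS tnot by (simp add: greedy_cands_def t_def)
  have imin: "i0 \<le> i'" if "(i', j') \<in> greedy_cands (Fib_words n k) L1 w" for i' j'
    using onlyi[of i' j'] that by (simp add: w_def i0_def)
  have w4: "w ! (n - 4)" using wn[of "n-4"] n k by auto
  have jmin: "j0 \<le> j'" if c: "(i0, j') \<in> greedy_cands (Fib_words n k) L1 w" for j'
  proof (rule ccontr)
    assume "\<not> j0 \<le> j'"
    then have jl: "j' < n - 2" by (simp add: j0_def)
    have ok': "hom_trans_ok w i0 j'" and inS': "hom_trans w i0 j' \<in> Fib_words n k"
      using c by (auto simp: greedy_cands_def)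
    have nj: "\<not> w ! j'" using ok' by (simp add: hom_trans_ok_def)
    have btw: "\<forall>p. j' < p \<and> p < i0 \<longrightarrow> \<not> w ! p" using ok' jl ij
      by (auto simp: hom_trans_ok_def i0_def j0_def)
    have "\<not> j' < n - 4" using btw w4 n k by (auto simp: i0_def)
    moreover have "j' \<noteq> n - 4" using nj w4 by auto
    ultimately have j'e: "j' = n - 3" using jl by arith
    let ?t = "hom_trans w i0 j'"
    have adj: "\<forall>p. Suc p < n \<longrightarrow> \<not> (?t ! p \<and> ?t ! Suc p)" using inS' by (simp add: Fib_words_def)
    have "?t ! (n - 4)" using w4 j'e k n lw by (auto simp: nth_hom_trans i0_def)
    moreover have "?t ! (n - 3)" using j'e k n lw by (auto simp: nth_hom_trans i0_def)
    moreover have "Suc (n - 4) = n - 3" "Suc (n - 4) < n" using k n by auto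
    ultimately show False using adj by metis
  qed
  have "greedy_next (Fib_words n k) L1 w = Some t"
    unfolding t_def by (rule greedy_next_eqI[OF cand]) (use imin jmin in auto)
  moreover have "t = top_word (n-1) k @ [False]"
  proof -
    let ?u = "top_word (n-1) k @ [False]"
    have "w = hom_trans ?u j0 i0"
      using hom_trans_top_word_to_end[OF k(1) n] by (simp add: w_def i0_def j0_def shifted_top_def)
    moreover have "j0 < length ?u" "i0 < length ?u" "?u ! j0" "\<not> ?u ! i0"
      using n k by (auto simp: i0_def j0_def nth_append nth_top_word)
    ultimately show ?thesis by (simp add: t_def hom_trans_hom_trans)
  qed
  ultimately show ?thesis by (simp add: w_def)
qed

lemma greedy_next_move_last_one:
  assumes wS: "e @ [False] \<in> Fib_words n k" and le: "length e = n - 1" and n1: "n \<ge> 1"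
    and r: "r < n - 1" "e ! r" "\<forall>p. r < p \<and> p < n - 1 \<longrightarrow> \<not> e ! p"
    and L1: "\<forall>u\<in>set L1. \<not> last u"
    and only: "\<And>i j. (i, j) \<in> greedy_cands (Fib_words n k) L1 (e @ [False]) \<Longrightarrow>
        j = n - 1 \<and> i < n - 1 \<and> e ! i \<and> (\<forall>p. i < p \<and> p < n - 1 \<longrightarrow> \<not> e ! p)"
  shows "greedy_next (Fib_words n k) L1 (e @ [False]) = Some (hom_trans (e @ [False]) r (n - 1))"
proof -
  define w where "w = e @ [False]"
  have lw: "length w = n" using le n1 by (simp add: w_def)
  have wn: "w ! p = (p < n - 1 \<and> e ! p)" if "p < n" for p
    using that le n1 by (auto simp: w_def nth_append)
  have ok: "hom_trans_ok w r (n - 1)"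
    unfolding hom_trans_ok_def using lw wn r n1 by auto
  define t where "t = hom_trans w r (n - 1)"
  have lt: "length t = n" using lw by (simp add: t_def)
  have tS: "t \<in> Fib_words n k" unfolding t_def w_def
  proof (rule hom_trans_in_Fib_words[OF wS])
    show "hom_trans_ok (e @ [False]) r (n - 1)" using ok by (simp add: w_def)
    show "Suc (n - 1) < n \<Longrightarrow> Suc (n - 1) = r \<or> \<not> (e @ [False]) ! Suc (n - 1)" by simp
    show "0 < n - 1 \<Longrightarrow> n - 1 - 1 = r \<or> \<not> (e @ [False]) ! (n - 1 - 1)"
    proof -
      assume "0 < n - 1"
      show ?thesis
      proof (cases "n - 1 - 1 = r")
        case True then show ?thesis by simp
      next
        case False
        then have "r < n - 1 - 1" "n - 1 - 1 < n - 1" using r n1 \<open>0 < n - 1\<close> by arith+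
        then have "\<not> e ! (n - 1 - 1)" using r by blast
        then show ?thesis using wn[of "n - 1 - 1"] n1 by (simp add: w_def)
      qed
    qed
  qed
  have "t ! (n - 1)" using lw r n1 by (simp add: t_def nth_hom_trans)
  then have tl: "last t" using last_conv_nth_length[OF lt n1] by simp
  have tnot: "t \<notin> set L1" using L1 tl by auto
  have cand: "(r, n - 1) \<in> greedy_cands (Fib_words n k) L1 w"
    using ok tS tnot by (simp add: greedy_cands_def t_def)
  have ieq: "i' = r \<and> j' = n - 1" if "(i', j') \<in> greedy_cands (Fib_words n k) L1 w" for i' j'
  proof -
    have o: "j' = n - 1" "i' < n - 1" "e ! i'" "\<forall>p. i' < p \<and> p < n - 1 \<longrightarrow> \<not> e ! p"
      using only[of i' j'] that by (auto simp: w_def)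
    have "\<not> i' < r" using o(4) r by blast
    moreover have "\<not> r < i'" using r(3) o(2,3) by blast
    ultimately show ?thesis using o(1) by simp
  qed
  have "greedy_next (Fib_words n k) L1 w = Some t"
    unfolding t_def by (rule greedy_next_eqI[OF cand]) (use ieq in auto)
  then show ?thesis by (simp add: w_def t_def)
qed

lemma greedy_next_top_greedy_end:
  assumes k: "k \<ge> 1" and n: "2*k \<le> n"
    and wS: "top_greedy_end (n-2) (k-1) @ [False, True] \<in> Fib_words n k"
    and L1: "\<forall>u \<in> set L1. last u"
    and only: "\<And>i j. (i, j) \<in> greedy_cands (Fib_words n k) L1 (top_greedy_end (n-2) (k-1) @ [False, True])
      \<Longrightarrow> i = n - 1"
  shows "greedy_next (Fib_words n k) L1 (top_greedy_end (n-2) (k-1) @ [False, True])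
    = Some ((if odd k then packed_word (n-1) k else top_word (n-1) k) @ [False])"
proof (cases "odd k")
  case True
  then have "top_greedy_end (n-2) (k-1) = packed_word (n-2) (k-1)"
    using k by (simp add: top_greedy_end_def)
  with greedy_next_packed_end[OF k True n _ L1] wS only True show ?thesis by simp
next
  case False
  then have k2: "k \<ge> 2" and "n - 2 + 1 \<noteq> 2*(k-1)" using k n by presburger+
  then have "top_greedy_end (n-2) (k-1) = top_word (n-3) (k-1) @ [False]"
    using False k by (simp add: top_greedy_end_def numeral_3_eq_3)
  with greedy_next_top_end[OF k2 _ n _ L1] wS only False show ?thesis by simp
qed

lemma rightmost_one_of_greedy_end:
  assumes k: "k \<ge> 1" and n: "2*k \<le> n"
    and e: "e = top_word (n-1) k \<or> e = top_greedy_end (n-1) k"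
  obtains r where "r < n - 1" "e ! r" "\<forall>p. r < p \<and> p < n - 1 \<longrightarrow> \<not> e ! p"
    "k \<ge> 2 \<Longrightarrow> \<exists>\<gamma>. hom_trans (e @ [False]) r (n-1) = \<gamma> @ [False, True] \<and> \<not> last \<gamma> \<and>
       (\<gamma> = packed_word (n-2) (k-1) \<or> (\<exists>d. \<gamma> = shifted_top (n-2) (k-1) d))"
proof -
  consider "e = top_word (n-1) k" | "odd k" "2*k + 1 \<le> n" "e = top_word (n-2) k @ [False]"
    | "even k" "e = packed_word (n-1) k"
  proof -
    have "2*k \<le> (n - 1) + 1" using n by simp
    then show thesis
    proof (rule top_greedy_end_cases)
      assume "odd k" "2*k \<le> n - 1" "top_greedy_end (n-1) k = top_word (n - 1 - 1) k @ [False]"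
      moreover have "n - 1 - 1 = n - 2" "2*k + 1 \<le> n" using \<open>2*k \<le> n - 1\<close> k by simp_all
      ultimately show thesis using e that(1) that(2)[OF \<open>odd k\<close>] by auto
    qed (use e that(1,3) in auto)
  qed
  then show ?thesis
  proof cases
    case 1
    show ?thesis
    proof (rule that[of "n - 2"])
      show "n - 2 < n - 1" "e ! (n - 2)" using 1 n k by (auto simp: nth_top_word)
      show "\<forall>p. n - 2 < p \<and> p < n - 1 \<longrightarrow> \<not> e ! p" by auto
      assume k2: "k \<ge> 2"
      show "\<exists>\<gamma>. hom_trans (e @ [False]) (n-2) (n-1) = \<gamma> @ [False, True] \<and> \<not> last \<gamma> \<and>
          (\<gamma> = packed_word (n-2) (k-1) \<or> (\<exists>d. \<gamma> = shifted_top (n-2) (k-1) d))"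
        using hom_trans_top_word_to_end[OF k2 n] 1 last_shifted_top_Suc[of "n-2" "k-1" 0] by auto
    qed
  next
    case 2
    show ?thesis
    proof (rule that[of "n - 3"])
      show "n - 3 < n - 1" using 2 k by arith
      have "n - 3 < n - 2" "n - 2 - 2*k \<le> n - 3" "n - 2 - (n - 3) = 1" using 2 k by arith+
      then show "e ! (n - 3)" using 2 by (simp add: nth_append nth_top_word)
      show "\<forall>p. n - 3 < p \<and> p < n - 1 \<longrightarrow> \<not> e ! p"
      proof (intro allI impI)
        fix p assume "n - 3 < p \<and> p < n - 1"
        then have "p = n - 2" using 2 k by arith
        then show "\<not> e ! p" using 2 by (simp add: nth_append)
      qed
      assume k2: "k \<ge> 2"
      show "\<exists>\<gamma>. hom_trans (e @ [False]) (n-3) (n-1) = \<gamma> @ [False, True] \<and> \<not> last \<gamma> \<and>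
          (\<gamma> = packed_word (n-2) (k-1) \<or> (\<exists>d. \<gamma> = shifted_top (n-2) (k-1) d))"
        using hom_trans_top_word_False_to_end[OF k2 2(2)] 2(3) last_shifted_top_Suc[of "n-2" "k-1" 1]
        by (auto simp: numeral_2_eq_2)
    qed
  next
    case 3
    have k2: "k \<ge> 2" using 3 k by presburger
    show ?thesis
    proof (rule that[of "2*k - 2"])
      show "2*k - 2 < n - 1" "e ! (2*k - 2)" using 3 n k by (auto simp: nth_packed_word)
      show "\<forall>p. 2*k - 2 < p \<and> p < n - 1 \<longrightarrow> \<not> e ! p"
      proof (intro allI impI)
        fix p assume p: "2*k - 2 < p \<and> p < n - 1"
        then have "\<not> (p < 2*k \<and> even p)" using k by presburger
        then show "\<not> e ! p" using 3 p by (simp add: nth_packed_word)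
      qed
      have "\<not> last (packed_word (n-2) (k-1))" using last_packed_word[of "k-1" "n-2"] n k2 by simp
      then show "\<exists>\<gamma>. hom_trans (e @ [False]) (2*k - 2) (n-1) = \<gamma> @ [False, True] \<and> \<not> last \<gamma> \<and>
          (\<gamma> = packed_word (n-2) (k-1) \<or> (\<exists>d. \<gamma> = shifted_top (n-2) (k-1) d))"
        using hom_trans_packed_word_to_end[OF k n] 3 by simp
    qed
  qed
qed

lemma greedy_cands_after_False_block:
  assumes a: "a \<in> Fib_words (n-1) k" and n: "2 \<le> n"
    and L1: "(\<lambda>u. u @ [False, True]) ` Fib_words (n-2) (k-1) \<subseteq> set L1" "\<forall>u \<in> set L1. last u"
  shows "greedy_cands (Fib_words n k) (L1 @ map (\<lambda>u. u @ [False]) (Fgreedy (n-1) k a))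
    (last (Fgreedy (n-1) k a) @ [False]) = {}"
proof (rule equals0I, clarify)
  let ?w = "last (Fgreedy (n-1) k a) @ [False]"
  fix i j assume c: "(i, j) \<in> greedy_cands (Fib_words n k) (L1 @ map (\<lambda>u. u @ [False]) (Fgreedy (n-1) k a)) ?w"
  let ?t = "hom_trans ?w i j"
  have "Fib_words n k = Fib_words (Suc (n-1)) k" using n by simp
  moreover have "\<forall>u \<in> set L1. \<forall>x. u \<noteq> x @ [False]" using L1(2) by auto
  ultimately have "j = n - 1" using greedy_cands_Fgreedy_append_False[OF a, of L1 i j] c by simp
  moreover have "i \<noteq> j" "length ?w = n"
    using c last_Fgreedy_in[OF a] length_Fib_words n
    by (auto simp: greedy_cands_def hom_trans_ok_def)
  ultimately have "last ?t" using last_conv_nth_length[of ?t n] n by (simp add: nth_hom_trans)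
  moreover have "?t \<in> Fib_words n k" "?t \<notin> set L1" using c by (auto simp: greedy_cands_def)
  ultimately show False using Fib_words_take[of ?t n k] L1(1) n by auto
qed

lemma greedy_cands_after_False_True_block:
  assumes a: "a \<in> Fib_words (n-2) (k-1)" and k: "k \<ge> 1" and n: "2*k \<le> n"
    and last: "last (Fgreedy (n-2) (k-1) a) = top_word (n-2) (k-1)"
    and L1: "k = 1 \<Longrightarrow> (\<lambda>u. u @ [False]) ` Fib_words (n-1) k \<subseteq> set L1" "\<forall>u \<in> set L1. \<not> last u"
  shows "greedy_cands (Fib_words n k) (L1 @ map (\<lambda>u. u @ [False, True]) (Fgreedy (n-2) (k-1) a))
    (top_word (n-2) (k-1) @ [False, True]) = {}"
proof (rule equals0I, clarify)
  let ?w = "top_word (n-2) (k-1) @ [False, True]"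
  fix i j assume c: "(i, j) \<in> greedy_cands (Fib_words n k)
    (L1 @ map (\<lambda>u. u @ [False, True]) (Fgreedy (n-2) (k-1) a)) ?w"
  have "n - 2 + 2 = n" "Suc (k - 1) = k" using n k by arith+
  then have "i = Suc (n-2)"
    using greedy_cands_Fgreedy_append_False_True[OF a, of L1 i j] c L1(2) last by fastforce
  then have i: "i = n - 1" using n k by simp
  show False
  proof (cases "k \<ge> 2")
    case True
    show False by (rule top_word_last_one_stuck[OF True n c i])
  next
    case False
    let ?t = "hom_trans ?w i j"
    have "i \<noteq> j" "?t \<in> Fib_words n k" "?t \<notin> set L1" using c
      by (auto simp: greedy_cands_def hom_trans_ok_def)
    moreover have "length ?w = n" using n k by simp
    ultimately have "\<not> last ?t" using i last_conv_nth_length[of ?t n] n k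
      by (simp add: nth_hom_trans)
    then show False
      using Fib_words_butlast[OF \<open>?t \<in> Fib_words n k\<close>] \<open>?t \<notin> set L1\<close> L1(1) False k n by auto
  qed
qed

section \<open>The induction\<close>

text \<open>Exhaustiveness is claimed exactly for the start words at which the second block of a
  greedy list can begin.\<close>

definition greedy_inv :: "nat \<Rightarrow> nat \<Rightarrow> bool list \<Rightarrow> bool" where
  "greedy_inv n k a \<longleftrightarrow> suffix_partitioned (Fgreedy n k a) \<and>
     (a \<noteq> top_word n k \<longrightarrow> last (Fgreedy n k a) = top_word n k) \<and>
     ((k \<le> 1 \<or> a = packed_word n k \<or> (\<exists>d. a = shifted_top n k d)) \<longrightarrow>
        set (Fgreedy n k a) = Fib_words n k) \<and>
     (a = top_word n k \<longrightarrow> last (Fgreedy n k a) = top_greedy_end n k)"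

definition greedy_inv_all :: "nat \<Rightarrow> bool" where
  "greedy_inv_all n \<longleftrightarrow> (\<forall>k a. a \<in> Fib_words n k \<longrightarrow> greedy_inv n k a)"

lemma greedy_invD:
  assumes "greedy_inv n k a"
  shows "suffix_partitioned (Fgreedy n k a)"
    and "last (Fgreedy n k a) = (if a = top_word n k then top_greedy_end n k else top_word n k)"
    and "k \<le> 1 \<or> a = packed_word n k \<or> (\<exists>d. a = shifted_top n k d) \<Longrightarrow>
      set (Fgreedy n k a) = Fib_words n k"
  using assms by (auto simp: greedy_inv_def)

lemma greedy_inv_singleton:
  assumes "Fib_words n k = {top_word n k}" "top_greedy_end n k = top_word n k"
  shows "greedy_inv n k (top_word n k)"
proof -
  have "Fgreedy n k (top_word n k) = [top_word n k]"
    unfolding Fgreedy_def by (rule greedy_singleton[OF assms(1)])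
  then show ?thesis using assms by (simp add: greedy_inv_def suffix_partitioned_singleton)
qed

lemma greedy_inv_last_True:
  assumes a: "a \<in> Fib_words n k" and k: "k \<ge> 1" and n: "2*k \<le> n" and la: "last a"
    and ne: "take (n-2) a \<noteq> top_word (n-2) (k-1)" and IH: "greedy_inv_all (n-2)"
  shows "greedy_inv n k a"
proof -
  define a' where "a' = take (n-2) a"
  have nk: "n - 2 + 2 = n" "Suc (k - 1) = k" using n k by arith+
  have S: "Fib_words n k = Fib_words ((n-2)+2) (Suc (k-1))" by (simp only: nk)
  have dec: "a = a' @ [False, True]" "a' \<in> Fib_words (n-2) (k-1)"
    using Fib_words_take[OF a _ la] n k by (auto simp: a'_def)
  have k2: "k \<ge> 2"
    using ne dec(2) Fib_words_weight_0_eq_top[of a' "n-2"] k by (cases "k = 1") (auto simp: a'_def)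
  define M where "M = Fgreedy (n-2) (k-1) a'"
  have gd: "greedy_inv (n-2) (k-1) a'" using IH dec(2) by (simp add: greedy_inv_all_def)
  have lastM: "last M = top_word (n-2) (k-1)" using greedy_invD(2)[OF gd] ne
    by (simp add: M_def a'_def)
  note run = is_greedy_run_Fgreedy[OF dec(2), folded M_def]
  define L where "L = map (\<lambda>u. u @ [False, True]) M"
  have lastL: "last L = top_word (n-2) (k-1) @ [False, True]" using run(4) lastM
    by (simp add: L_def last_map)
  have "greedy_cands (Fib_words n k) L (last L) = {}"
    using greedy_cands_after_False_True_block[OF dec(2) k n, of "[]"] lastM lastL k2
    by (simp add: L_def M_def)
  moreover have "greedy_steps (Fib_words n k) [] L"
    unfolding S L_def M_def by (rule greedy_steps_Fgreedy_append_False_True[OF dec(2)]) simp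
  ultimately have "is_greedy_run (Fib_words n k) L"
    using run(4) by (simp add: is_greedy_run_def L_def greedy_next_eq_None_iff)
  then have g: "Fgreedy n k a = L"
    using greedy_eq_if_is_greedy_run[OF finite_Fib_words _ ] run(2,4) dec(1) a
    by (fastforce simp: Fgreedy_def L_def hd_map)
  have top: "top_word n k = top_word (n-2) (k-1) @ [False, True]"
    using top_word_eq_append n k by simp
  then have ane: "a \<noteq> top_word n k" using dec(1) ne unfolding a'_def by (metis append_same_eq)
  have "a \<noteq> packed_word n k" using la last_packed_word[of k n] n k by auto
  moreover have "\<nexists>d. a = shifted_top n k d" using la ane last_shifted_top shifted_top_0 by metis
  ultimately show ?thesis
    using k2 greedy_invD(1)[OF gd] ane lastL top
    by (auto simp: greedy_inv_def g L_def M_def intro: suffix_partitioned_map_append)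
qed

lemma greedy_inv_top_word:
  assumes aS: "top_word n k \<in> Fib_words n k" and k: "k \<ge> 1" and n: "2*k \<le> n"
    and IH2: "greedy_inv_all (n-2)" and IH1: "greedy_inv_all (n-1)"
  shows "greedy_inv n k (top_word n k)"
proof -
  have nk: "n - 2 + 2 = n" "Suc (k - 1) = k" "Suc (n - 1) = n" using n k by arith+
  have S: "Fib_words n k = Fib_words ((n-2)+2) (Suc (k-1))"
    and S0: "Fib_words n k = Fib_words (Suc (n-1)) k" by (simp_all only: nk)
  have top: "top_word n k = top_word (n-2) (k-1) @ [False, True]"
    using top_word_eq_append n k by simp
  have a'S: "top_word (n-2) (k-1) \<in> Fib_words (n-2) (k-1)"
    using aS top S append_False_True_in_Fib_words_iff by simp
  define M1 where "M1 = Fgreedy (n-2) (k-1) (top_word (n-2) (k-1))"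
  have gd1: "greedy_inv (n-2) (k-1) (top_word (n-2) (k-1))" using IH2 a'S
    by (simp add: greedy_inv_all_def)
  have setM1: "set M1 = Fib_words (n-2) (k-1)"
    using greedy_invD(3)[OF gd1] shifted_top_0 unfolding M1_def by metis
  have lastM1: "last M1 = top_greedy_end (n-2) (k-1)" using greedy_invD(2)[OF gd1]
    by (simp add: M1_def)
  note run1 = is_greedy_run_Fgreedy[OF a'S, folded M1_def]
  define L1 where "L1 = map (\<lambda>u. u @ [False, True]) M1"
  have lastL1: "last L1 = top_greedy_end (n-2) (k-1) @ [False, True]"
    using run1(4) lastM1 by (simp add: L1_def last_map)
  define \<beta> where "\<beta> = (if odd k then packed_word (n-1) k else top_word (n-1) k)"
  have tr: "greedy_next (Fib_words n k) L1 (last L1) = Some (\<beta> @ [False])"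
    unfolding lastL1 \<beta>_def
  proof (rule greedy_next_top_greedy_end[OF k n])
    show "top_greedy_end (n-2) (k-1) @ [False, True] \<in> Fib_words n k"
      using last_Fgreedy_in[OF a'S] lastM1 S append_False_True_in_Fib_words_iff length_Fib_words
      by (simp add: M1_def)
    show "i = n - 1" if "(i, j) \<in> greedy_cands (Fib_words n k) L1 (top_greedy_end (n-2) (k-1) @ [False, True])"
      for i j
      using greedy_cands_Fgreedy_append_False_True[OF a'S, of "[]" i j] that S lastM1 n k
      by (simp add: L1_def M1_def)
  qed (simp add: L1_def)
  have \<beta>S: "\<beta> \<in> Fib_words (n-1) k"
    using greedy_next_Some_mem(1)[OF tr] S0 append_False_in_Fib_words_iff[of \<beta> "n-1"]
    by (simp add: \<beta>_def)
  define M2 where "M2 = Fgreedy (n-1) k \<beta>"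
  have gd2: "greedy_inv (n-1) k \<beta>" using IH1 \<beta>S by (simp add: greedy_inv_all_def)
  have setM2: "set M2 = Fib_words (n-1) k"
    using greedy_invD(3)[OF gd2] shifted_top_0 unfolding M2_def \<beta>_def by metis
  have lastM2: "last M2 = (if even k then packed_word (n-1) k else top_word (n-1) k)"
  proof (cases "odd k \<and> n = 2*k")
    case True
    then have "packed_word (n-1) k = top_word (n-1) k" using packed_word_eq_top_word[of "n-1" k] k
      by simp
    then show ?thesis using greedy_invD(2)[OF gd2] True k
      by (simp add: M2_def \<beta>_def top_greedy_end_def)
  next
    case False
    then have "odd k \<Longrightarrow> packed_word (n-1) k \<noteq> top_word (n-1) k"
      using packed_word_ne_top_word[of k "n-1"] n k by simp
    then show ?thesis using greedy_invD(2)[OF gd2] by (simp add: M2_def \<beta>_def top_greedy_end_def)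
  qed
  note run2 = is_greedy_run_Fgreedy[OF \<beta>S, folded M2_def]
  define L2 where "L2 = map (\<lambda>u. u @ [False]) M2"
  have lastL2: "last L2 = last M2 @ [False]" using run2(4) by (simp add: L2_def last_map)
  have stuck: "greedy_cands (Fib_words n k) (L1 @ L2) (last L2) = {}"
    unfolding lastL2 unfolding L2_def M2_def
    by (rule greedy_cands_after_False_block[OF \<beta>S]) (use n k setM1 in \<open>auto simp: L1_def\<close>)
  have g: "Fgreedy n k (top_word n k) = L1 @ L2"
  proof -
    have "greedy (Fib_words n k) (hd L1) = L1 @ L2"
    proof (rule greedy_eq_append[OF finite_Fib_words])
      show "greedy_steps (Fib_words n k) [] L1"
        unfolding S L1_def M1_def by (rule greedy_steps_Fgreedy_append_False_True[OF a'S]) simp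
      show "greedy_steps (Fib_words n k) L1 L2"
        unfolding S0 L2_def M2_def
        by (rule greedy_steps_Fgreedy_append_False[OF \<beta>S]) (simp add: L1_def)
      show "greedy_cands (Fib_words n k) (L1 @ L2) (last L2) = {}" by (rule stuck)
    qed (use aS top tr run1 run2 in \<open>simp_all add: L1_def L2_def hd_map\<close>)
    then show ?thesis using run1(2,4) top by (simp add: Fgreedy_def L1_def hd_map M1_def)
  qed
  have "last (L1 @ L2) = top_greedy_end n k"
    using lastM2 run2(4) packed_word_Suc[of "n-1" k] n k
    by (cases "even k") (auto simp: top_greedy_end_def L2_def last_map, presburger+)
  moreover have "set (L1 @ L2) = Fib_words n k"
    using Fib_words_split[of n k] n k setM1 setM2 by (simp add: L1_def L2_def)
  ultimately show ?thesis
    using greedy_invD(1)[OF gd1] greedy_invD(1)[OF gd2]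
    by (simp add: greedy_inv_def g L1_def L2_def M1_def M2_def suffix_partitioned_append_blocks)
qed

lemma greedy_inv_last_False:
  assumes a: "a \<in> Fib_words n k" and k: "k \<ge> 1" and n: "2*k \<le> n" and la: "\<not> last a"
    and IH1: "greedy_inv_all (n-1)" and IH2: "greedy_inv_all (n-2)"
  shows "greedy_inv n k a"
proof -
  have nk: "n - 2 + 2 = n" "Suc (k - 1) = k" "Suc (n - 1) = n" using n k by arith+
  have S: "Fib_words n k = Fib_words ((n-2)+2) (Suc (k-1))"
    and S0: "Fib_words n k = Fib_words (Suc (n-1)) k" by (simp_all only: nk)
  define a' where "a' = butlast a"
  have dec: "a = a' @ [False]" "a' \<in> Fib_words (n-1) k"
    using Fib_words_butlast[OF a _ la] n k by (auto simp: a'_def)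
  define M1 where "M1 = Fgreedy (n-1) k a'"
  have gd1: "greedy_inv (n-1) k a'" using IH1 dec(2) by (simp add: greedy_inv_all_def)
  note run1 = is_greedy_run_Fgreedy[OF dec(2), folded M1_def]
  define e where "e = last M1"
  have le: "length e = n - 1" using last_Fgreedy_in[OF dec(2)] length_Fib_words
    by (simp add: e_def M1_def)
  have "e = top_word (n-1) k \<or> e = top_greedy_end (n-1) k"
    using greedy_invD(2)[OF gd1] by (simp add: e_def M1_def split: if_splits)
  then obtain r
    where r: "r < n - 1" "e ! r" "\<forall>p. r < p \<and> p < n - 1 \<longrightarrow> \<not> e ! p"
      and shape: "k \<ge> 2 \<Longrightarrow> \<exists>\<gamma>. hom_trans (e @ [False]) r (n-1) = \<gamma> @ [False, True] \<and> \<not> last \<gamma> \<and>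
         (\<gamma> = packed_word (n-2) (k-1) \<or> (\<exists>d. \<gamma> = shifted_top (n-2) (k-1) d))"
    by (elim rightmost_one_of_greedy_end[OF k n]) (rule that; assumption)
  define L1 where "L1 = map (\<lambda>u. u @ [False]) M1"
  define t where "t = hom_trans (e @ [False]) r (n-1)"
  have lastL1: "last L1 = e @ [False]" using run1(4) by (simp add: L1_def e_def last_map)
  have tr: "greedy_next (Fib_words n k) L1 (last L1) = Some t"
    unfolding lastL1 t_def
  proof (rule greedy_next_move_last_one[OF _ le _ r])
    show "e @ [False] \<in> Fib_words n k"
      using last_Fgreedy_in[OF dec(2)] S0 append_False_in_Fib_words_iff le
      by (simp add: e_def M1_def)
    show "j = n - 1 \<and> i < n - 1 \<and> e ! i \<and> (\<forall>p. i < p \<and> p < n - 1 \<longrightarrow> \<not> e ! p)"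
      if "(i, j) \<in> greedy_cands (Fib_words n k) L1 (e @ [False])" for i j
      using greedy_cands_Fgreedy_append_False[OF dec(2), of "[]" i j] that S0
      by (simp add: L1_def e_def M1_def)
  qed (use n k in \<open>auto simp: L1_def\<close>)
  have tS: "t \<in> Fib_words n k" using greedy_next_Some_mem(1)[OF tr] .
  have "last t" using le r n k last_conv_nth_length[of t n] by (simp add: t_def nth_hom_trans)
  define \<gamma> where "\<gamma> = take (n-2) t"
  have tdec: "t = \<gamma> @ [False, True]" "\<gamma> \<in> Fib_words (n-2) (k-1)"
    using Fib_words_take[OF tS _ \<open>last t\<close>] n k by (auto simp: \<gamma>_def)
  have \<gamma>: "\<gamma> \<noteq> top_word (n-2) (k-1) \<and> (\<gamma> = packed_word (n-2) (k-1) \<or> (\<exists>d. \<gamma> = shifted_top (n-2) (k-1) d))"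
    if "k \<ge> 2"
    using shape[OF that] tdec(1) last_top_word[of "k-1" "n-2"] that n by (fastforce simp: t_def)
  define M2 where "M2 = Fgreedy (n-2) (k-1) \<gamma>"
  have gd2: "greedy_inv (n-2) (k-1) \<gamma>" using IH2 tdec(2) by (simp add: greedy_inv_all_def)
  have setM2: "set M2 = Fib_words (n-2) (k-1)"
    using greedy_invD(3)[OF gd2] \<gamma> k by (cases "k \<ge> 2") (auto simp: M2_def)
  have lastM2: "last M2 = top_word (n-2) (k-1)"
  proof (cases "k \<ge> 2")
    case False
    then have "k - 1 = 0" using k by simp
    then show ?thesis
      using greedy_invD(2)[OF gd2] Fib_words_weight_0_eq_top[OF tdec(2)[unfolded \<open>k - 1 = 0\<close>]]
      by (simp add: M2_def top_greedy_end_def packed_word_0)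
  qed (use greedy_invD(2)[OF gd2] \<gamma> in \<open>simp add: M2_def\<close>)
  note run2 = is_greedy_run_Fgreedy[OF tdec(2), folded M2_def]
  define L2 where "L2 = map (\<lambda>u. u @ [False, True]) M2"
  have lastL2: "last L2 = top_word (n-2) (k-1) @ [False, True]"
    using run2(4) lastM2 by (simp add: L2_def last_map)
  have stuck: "greedy_cands (Fib_words n k) (L1 @ L2) (last L2) = {}"
    unfolding lastL2 unfolding L2_def M2_def
  proof (rule greedy_cands_after_False_True_block[OF tdec(2) k n])
    show "last (Fgreedy (n-2) (k-1) \<gamma>) = top_word (n-2) (k-1)" using lastM2 by (simp add: M2_def)
    show "(\<lambda>u. u @ [False]) ` Fib_words (n-1) k \<subseteq> set L1" if "k = 1"
      using greedy_invD(3)[OF gd1] that by (simp add: L1_def M1_def)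
  qed (simp add: L1_def)
  have g: "Fgreedy n k a = L1 @ L2"
  proof -
    have "greedy (Fib_words n k) (hd L1) = L1 @ L2"
    proof (rule greedy_eq_append[OF finite_Fib_words])
      show "greedy_steps (Fib_words n k) [] L1"
        unfolding S0 L1_def M1_def by (rule greedy_steps_Fgreedy_append_False[OF dec(2)]) simp
      show "greedy_steps (Fib_words n k) L1 L2"
        unfolding S L2_def M2_def
        by (rule greedy_steps_Fgreedy_append_False_True[OF tdec(2)]) (simp add: L1_def)
      show "greedy_cands (Fib_words n k) (L1 @ L2) (last L2) = {}" by (rule stuck)
    qed (use a dec tr tdec run1 run2 in \<open>simp_all add: L1_def L2_def hd_map\<close>)
    then show ?thesis using run1(2,4) dec(1) by (simp add: Fgreedy_def L1_def hd_map M1_def)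
  qed
  have top: "top_word n k = top_word (n-2) (k-1) @ [False, True]"
    using top_word_eq_append n k by simp
  have ane: "a \<noteq> top_word n k" using la top by auto
  have "set (L1 @ L2) = Fib_words n k"
    if "k \<le> 1 \<or> a = packed_word n k \<or> (\<exists>d. a = shifted_top n k d)"
  proof -
    have "k \<le> 1 \<or> a' = packed_word (n-1) k \<or> (\<exists>d. a' = shifted_top (n-1) k d)"
      using that packed_word_Suc[of "n-1" k] shifted_top_Suc[of "n-1" k] shifted_top_0 ane n k
      by (auto simp: a'_def) (metis butlast_snoc not0_implies_Suc)
    then have "set M1 = Fib_words (n-1) k" using greedy_invD(3)[OF gd1] by (simp add: M1_def)
    then show ?thesis using Fib_words_split[of n k] n k setM2 by (auto simp: L1_def L2_def)
  qed
  then show ?thesis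
    using greedy_invD(1)[OF gd1] greedy_invD(1)[OF gd2] ane lastL2 top run2(4)
    by (simp add: greedy_inv_def g L1_def L2_def M1_def M2_def suffix_partitioned_append_blocks)
qed

lemma greedy_inv_all_holds: "greedy_inv_all n"
proof (induction n rule: less_induct)
  case (less n)
  show ?case unfolding greedy_inv_all_def
  proof (intro allI impI)
    fix k a assume a: "a \<in> Fib_words n k"
    consider "k = 0" | "n + 1 = 2*k" | "k \<ge> 1" "2*k \<le> n"
      using Fib_words_weight_bound[OF a] by linarith
    then show "greedy_inv n k a"
    proof cases
      case 1
      then show ?thesis
        using Fib_words_weight_0 Fib_words_weight_0_eq_top[of a n] a
          greedy_inv_singleton[of n 0] by (simp add: top_greedy_end_def packed_word_0)
    next
      case 2
      then show ?thesis
        using Fib_words_max_weight[OF 2 a] Fib_words_max_weight_eq_top[OF 2 a] greedy_inv_singleton[of n k]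
          packed_word_eq_top_word[OF 2] by (simp add: top_greedy_end_def)
    next
      case 3
      then have IH: "greedy_inv_all (n-1)" "greedy_inv_all (n-2)" using less by simp_all
      show ?thesis
      proof (cases "last a")
        case True
        with Fib_words_take[OF a _ True] 3 have "a = take (n-2) a @ [False, True]" by simp
        moreover have "top_word n k = top_word (n-2) (k-1) @ [False, True]"
          using top_word_eq_append 3 by simp
        ultimately show ?thesis
          using greedy_inv_top_word[of n k] greedy_inv_last_True[OF a 3 True _ IH(2)] a 3 IH
          by (cases "take (n-2) a = top_word (n-2) (k-1)") auto
      next
        case False
        then show ?thesis by (rule greedy_inv_last_False[OF a 3 _ IH])
      qed
    qed
  qed
qed

theorem lemma2:
  fixes n k :: nat and \<alpha> :: "bool list"
  assumes "2 * k \<le> n + 1"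
    and "\<alpha> \<in> Fib_words n k"
  shows "suffix_partitioned (Fgreedy n k \<alpha>)"
  using greedy_inv_all_holds[of n] assms(2) by (simp add: greedy_inv_all_def greedy_inv_def)

end
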